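(* Let $q\ge1$ and $\alpha\in(0,2\wedge q)$. For all $R>2$ and $K>0$ there is a constant $C=C(K,R)$ such that for all $0\le p,r\le R$, $\eta_0,\eta_1\in(1/R,1/2)$, $l\in\{1,\dots,q\}$, $0\le s<t\le t'<K$ and $x,x'\in[-K,K]^q$: $$\begin{aligned}\int\!\!\int&|w-x|^p|z-x|^p\,(p_{t-s,l}(w-x)-p_{t'-s,l}(w-x'))(p_{t-s,l}(z-x)-p_{t'-s,l}(z-x'))\\&\times\mathbf 1\{|w-x|>(t'-s)^{1/2-\eta_0}\vee2|x-x'|\}\,e^{r|w-x|+r|z-x|}(|w-z|^{-\alpha}+1)\,dw\,dz\\&\le C(t-s)^{-1-\alpha/2}\exp\big(-\eta_1(t'-s)^{-2\eta_0}/256\big)\Big[1\wedge\frac{|x-x'|^2+|t-t'|}{t-s}\Big]^{1-\eta_1/2}.\end{aligned}$$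
   Context: $p_t(x)=(2\pi t)^{-q/2}\exp(-|x|^2/(2t))$ is the heat kernel on $\mathbb R^q$ and $p_{t,l}(x)=\partial_{x_l}p_t(x)=-\frac{x_l}{t}p_t(x)$; integrals are over $\mathbb R^q$. *)

theory Defs
  imports "HOL-Analysis.Analysis"
begin

text \<open>Heat kernel on R^q, with R^q rendered as real^'q, q = CARD('q).\<close>
definition heat_kernel :: "real \<Rightarrow> real^'q \<Rightarrow> real" where
  "heat_kernel t x = (2 * pi * t) powr (- real CARD('q) / 2) * exp (- (norm x)\<^sup>2 / (2 * t))"

text \<open>p_{t,l}(x) = d/dx_l p_t(x) = -(x_l/t) p_t(x).\<close>
definition heat_kernel_d :: "real \<Rightarrow> 'q \<Rightarrow> real^'q \<Rightarrow> real" where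
  "heat_kernel_d t l x = - (x $ l / t) * heat_kernel t x"

end

theory Submission
  imports Defs "HOL-Probability.Distributions"
begin

text \<open>
  Write \<open>a = t - s \<le> b = t' - s\<close> and \<open>u = w - x\<close>, \<open>h = x' - x\<close>. If \<open>b \<le> 2a\<close> and \<open>|h|\<^sup>2 \<le> a\<close>, the
  mean value theorem along the segment from \<open>(a, u)\<close> to \<open>(b, u - h)\<close> bounds the kernel increment
  by a Gaussian of variance \<open>\<approx> a\<close> times \<open>|h|/\<surd>a + (b - a)/a\<close>; otherwise the two kernels are bounded
  separately and the factor is \<open>1\<close>. Either way the square of this factor is at most
  \<open>4 (1 \<and> (|h|\<^sup>2 + b - a)/a)\<close>. On the support of the indicator \<open>|u| > b\<^bsup>1/2-\<eta>\<^sub>0\<^esup>\<close>, so half of the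
  Gaussian in \<open>w\<close> yields the factor \<open>exp (-b\<^bsup>-2\<eta>\<^sub>0\<^esup>/128)\<close>. The polynomial and exponential weights are
  absorbed into the Gaussians by halving their exponents, the singularity \<open>|w - z|\<^bsup>-\<alpha>\<^esup>\<close> is
  integrable against a Gaussian in \<open>z\<close> because \<open>\<alpha> < q\<close> and costs \<open>a\<^bsup>-\<alpha>/2\<^esup>\<close>, and Tonelli's theorem
  multiplies the \<open>z\<close>- and \<open>w\<close>-integrals.
\<close>

section \<open>Gaussian integrals\<close>

lemma nn_integral_exp_neg_square: "(\<integral>\<^sup>+x. ennreal (exp (- x\<^sup>2)) \<partial>lborel) = ennreal (sqrt pi)"
proof -
  have eq: "normal_density 0 (1/sqrt 2) x = exp (- x\<^sup>2) / sqrt pi" for x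
    by (simp add: normal_density_def real_sqrt_mult field_simps)
  have "(\<integral>\<^sup>+x. ennreal (normal_density 0 (1/sqrt 2) x) \<partial>lborel) = 1"
    by (subst nn_integral_eq_integral) auto
  hence "(\<integral>\<^sup>+x. ennreal (exp (- x\<^sup>2)) * ennreal (1 / sqrt pi) \<partial>lborel) = 1"
    by (simp add: eq ennreal_mult'[symmetric])
  hence "(\<integral>\<^sup>+x. ennreal (exp (- x\<^sup>2)) \<partial>lborel) * ennreal (1 / sqrt pi) * ennreal (sqrt pi) = ennreal (sqrt pi)"
    by (subst (asm) nn_integral_multc) auto
  thus ?thesis by (simp add: mult.assoc ennreal_mult'[symmetric])
qed

lemma norm_power2_eq_sum_Basis: "(norm (v::'a::euclidean_space))\<^sup>2 = (\<Sum>b\<in>Basis. (v \<bullet> b)\<^sup>2)"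
  by (subst power2_norm_eq_inner, subst euclidean_inner) (simp add: power2_eq_square)

lemma nn_integral_exp_neg_norm_square:
  "(\<integral>\<^sup>+v. ennreal (exp (- (norm (v::'a::euclidean_space))\<^sup>2)) \<partial>lborel) = ennreal (sqrt pi ^ DIM('a))"
proof -
  have "(\<lambda>v::'a. ennreal (exp (- (norm v)\<^sup>2))) = (\<lambda>v. \<Prod>b\<in>Basis. ennreal (exp (- (v \<bullet> b)\<^sup>2)))"
    by (auto simp: norm_power2_eq_sum_Basis exp_sum[symmetric] sum_negf prod_ennreal)
  hence "(\<integral>\<^sup>+v. ennreal (exp (- (norm (v::'a))\<^sup>2)) \<partial>lborel)
      = (\<Prod>b\<in>(Basis::'a set). (\<integral>\<^sup>+x. ennreal (exp (- x\<^sup>2)) \<partial>lborel))"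
    by (simp only:) (subst nn_integral_lborel_prod, auto)
  thus ?thesis by (simp add: nn_integral_exp_neg_square prod_ennreal ennreal_power)
qed

lemma nn_integral_lborel_scale:
  fixes f :: "'a::euclidean_space \<Rightarrow> ennreal"
  assumes [measurable]: "f \<in> borel_measurable borel" and c: "c > 0"
  shows "(\<integral>\<^sup>+w. f w \<partial>lborel) = ennreal (c ^ DIM('a)) * (\<integral>\<^sup>+v. f (t + c *\<^sub>R v) \<partial>lborel)"
proof -
  have "(\<integral>\<^sup>+w. f w \<partial>lborel)
      = (\<integral>\<^sup>+w. f w \<partial>density (distr lborel borel (\<lambda>x. t + c *\<^sub>R x)) (\<lambda>_. \<bar>c\<bar>^DIM('a)))"
    using lborel_affine[of c t] c by simp
  also have "\<dots> = (\<integral>\<^sup>+v. ennreal (\<bar>c\<bar>^DIM('a)) * f (t + c *\<^sub>R v) \<partial>lborel)"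
    by (simp add: nn_integral_density nn_integral_distr)
  also have "\<dots> = ennreal (c ^ DIM('a)) * (\<integral>\<^sup>+v. f (t + c *\<^sub>R v) \<partial>lborel)"
    using c by (simp add: nn_integral_cmult)
  finally show ?thesis .
qed

lemma nn_integral_abs_powr_neg_le:
  fixes \<beta> :: real
  assumes "0 \<le> \<beta>" "\<beta> < 1"
  shows "(\<integral>\<^sup>+y. ennreal (\<bar>y\<bar> powr (-\<beta>)) * indicator {-1..1} y \<partial>lborel) \<le> ennreal (2/(1-\<beta>))"
proof -
  let ?g = "\<lambda>y::real. ennreal (y powr (-\<beta>)) * indicator {0..1} y"
  have half: "(\<integral>\<^sup>+y. ?g y \<partial>lborel) = ennreal (1/(1-\<beta>))"
  proof -
    have "((\<lambda>y. y powr (-\<beta>)) has_integral (1 powr (-\<beta>+1) / (-\<beta>+1))) {0..1}"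
      by (rule has_integral_powr_from_0) (use assms in auto)
    from nn_integral_has_integral_lebesgue'[OF _ this] show ?thesis by simp
  qed
  have "(\<integral>\<^sup>+y. ennreal (\<bar>y\<bar> powr (-\<beta>)) * indicator {-1..1} y \<partial>lborel) \<le> (\<integral>\<^sup>+y. ?g y + ?g (-y) \<partial>lborel)"
    by (rule nn_integral_mono) (auto simp: indicator_def)
  also have "\<dots> = (\<integral>\<^sup>+y. ?g y \<partial>lborel) + (\<integral>\<^sup>+y. ?g (-y) \<partial>lborel)"
    by (rule nn_integral_add) auto
  also have "(\<integral>\<^sup>+y. ?g (-y) \<partial>lborel) = (\<integral>\<^sup>+y. ?g y \<partial>lborel)"
    using nn_integral_real_affine[of ?g "-1" 0] by simp
  finally show ?thesis using assms by (simp add: half ennreal_plus[symmetric] del: ennreal_plus)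
qed

lemma nn_integral_exp_neg_square_abs_powr_le:
  fixes \<beta> m :: real
  assumes "0 \<le> \<beta>" "\<beta> < 1"
  shows "(\<integral>\<^sup>+x. ennreal (exp (- x\<^sup>2) * \<bar>m - x\<bar> powr (-\<beta>)) \<partial>lborel) \<le> ennreal (2/(1-\<beta>) + sqrt pi)"
proof -
  let ?f = "\<lambda>x::real. ennreal (\<bar>x - m\<bar> powr (-\<beta>)) * indicator {-1..1} (x - m)"
  have le: "ennreal (exp (- x\<^sup>2) * \<bar>m - x\<bar> powr (-\<beta>)) \<le> ?f x + ennreal (exp (- x\<^sup>2))" for x
  proof (cases "\<bar>x - m\<bar> \<le> 1")
    case True
    have "exp (- x\<^sup>2) * \<bar>m - x\<bar> powr (-\<beta>) \<le> \<bar>x - m\<bar> powr (-\<beta>)"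
      using mult_right_mono[of "exp (- x\<^sup>2)" 1 "\<bar>m - x\<bar> powr (-\<beta>)"] by (simp add: abs_minus_commute)
    with True show ?thesis
      by (intro add_increasing2) (auto simp: indicator_def abs_le_iff intro: ennreal_leI)
  next
    case False
    have "1 \<le> \<bar>m - x\<bar> powr \<beta>"
      using False assms ge_one_powr_ge_zero[of "\<bar>m - x\<bar>" \<beta>] by (simp add: abs_minus_commute)
    hence "\<bar>m - x\<bar> powr (-\<beta>) \<le> 1"
      by (simp add: powr_minus divide_inverse inverse_le_1_iff)
    hence "exp (- x\<^sup>2) * \<bar>m - x\<bar> powr (-\<beta>) \<le> exp (- x\<^sup>2)"
      by (simp add: mult_left_le)
    thus ?thesis by (intro add_increasing) (auto intro: ennreal_leI)
  qed
  have "(\<integral>\<^sup>+x. ennreal (exp (- x\<^sup>2) * \<bar>m - x\<bar> powr (-\<beta>)) \<partial>lborel)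
      \<le> (\<integral>\<^sup>+x. ?f x + ennreal (exp (- x\<^sup>2)) \<partial>lborel)"
    by (rule nn_integral_mono) (rule le)
  also have "\<dots> = (\<integral>\<^sup>+x. ?f (m + 1 * x) \<partial>lborel) + (\<integral>\<^sup>+x. ennreal (exp (- x\<^sup>2)) \<partial>lborel)"
    using nn_integral_real_affine[of ?f 1 m] by (subst nn_integral_add) auto
  also have "\<dots> \<le> ennreal (2 / (1 - \<beta>)) + ennreal (sqrt pi)"
    unfolding nn_integral_exp_neg_square
    by (rule add_mono) (use nn_integral_abs_powr_neg_le[OF assms] in simp_all)
  finally show ?thesis using assms by (subst ennreal_plus) auto
qed

lemma norm_powr_neg_le_prod_Basis:
  fixes u v :: "'a::euclidean_space"
  assumes ne: "\<And>b. b \<in> Basis \<Longrightarrow> v \<bullet> b \<noteq> u \<bullet> b" and \<alpha>: "0 \<le> \<alpha>"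
  shows "norm (u - v) powr (-\<alpha>) \<le> (\<Prod>b\<in>Basis. \<bar>u \<bullet> b - v \<bullet> b\<bar> powr (-\<alpha> / DIM('a)))"
proof -
  have "u \<noteq> v" using ne SOME_Basis by blast
  hence "norm (u - v) powr (-\<alpha>) = (\<Prod>b\<in>(Basis::'a set). norm (u - v) powr (-\<alpha> / DIM('a)))"
    by (simp add: powr_power)
  also have "\<dots> \<le> (\<Prod>b\<in>Basis. \<bar>u \<bullet> b - v \<bullet> b\<bar> powr (-\<alpha> / DIM('a)))"
  proof (rule prod_mono, safe)
    fix b :: 'a assume b: "b \<in> Basis"
    have "\<bar>(u - v) \<bullet> b\<bar> \<le> norm (u - v)" using b by (rule Basis_le_norm)
    moreover have "\<bar>(u - v) \<bullet> b\<bar> > 0" using ne[OF b] by (simp add: inner_diff_left)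
    ultimately show "norm (u - v) powr (-\<alpha> / DIM('a)) \<le> \<bar>u \<bullet> b - v \<bullet> b\<bar> powr (-\<alpha> / DIM('a))"
      using \<alpha> by (intro powr_mono2') (auto simp: inner_diff_left)
  qed simp
  finally show ?thesis .
qed

lemma nn_integral_exp_neg_norm_square_norm_powr_le:
  fixes u :: "'a::euclidean_space" and \<alpha> :: real
  assumes \<alpha>: "0 < \<alpha>" "\<alpha> < DIM('a)"
  shows "(\<integral>\<^sup>+v. ennreal (exp (- (norm v)\<^sup>2) * norm (u - v) powr (-\<alpha>)) \<partial>lborel)
     \<le> ennreal ((2/(1-\<alpha>/DIM('a)) + sqrt pi) ^ DIM('a))"
proof -
  define \<beta> where "\<beta> = \<alpha> / DIM('a)"
  have \<beta>: "0 \<le> \<beta>" "\<beta> < 1" using \<alpha> by (auto simp: \<beta>_def field_simps)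
  \<comment> \<open>On the null set where a coordinate of \<open>v\<close> equals that of \<open>u\<close> the factor is \<open>\<top>\<close>.\<close>
  define \<psi> where "\<psi> b x = (if x = u \<bullet> b then top else ennreal (exp (- x\<^sup>2) * \<bar>u \<bullet> b - x\<bar> powr (-\<beta>)))"
    for b :: 'a and x :: real
  have [measurable]: "\<psi> b \<in> borel_measurable borel" for b
    unfolding \<psi>_def by measurable
  have dom: "ennreal (exp (- (norm v)\<^sup>2) * norm (u - v) powr (-\<alpha>)) \<le> (\<Prod>b\<in>Basis. \<psi> b (v \<bullet> b))" for v
  proof (cases "\<exists>b\<in>Basis. v \<bullet> b = u \<bullet> b")
    case True
    thus ?thesis by (subst ennreal_prod_eq_top[THEN iffD2]) (auto simp: \<psi>_def)
  next
    case False
    have "exp (- (norm v)\<^sup>2) * norm (u - v) powr (-\<alpha>)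
        \<le> (\<Prod>b\<in>Basis. exp (- (v \<bullet> b)\<^sup>2)) * (\<Prod>b\<in>Basis. \<bar>u \<bullet> b - v \<bullet> b\<bar> powr (-\<beta>))"
      using norm_powr_neg_le_prod_Basis[of v u \<alpha>] False \<alpha>
      by (auto simp: \<beta>_def norm_power2_eq_sum_Basis exp_sum[symmetric] sum_negf intro!: mult_left_mono)
    also have "\<dots> = (\<Prod>b\<in>Basis. exp (- (v \<bullet> b)\<^sup>2) * \<bar>u \<bullet> b - v \<bullet> b\<bar> powr (-\<beta>))"
      by (simp add: prod.distrib)
    finally show ?thesis
      using False by (auto simp: \<psi>_def prod_ennreal intro!: ennreal_leI order_trans[OF _ eq_refl] prod.cong)
  qed
  have "(\<integral>\<^sup>+v. ennreal (exp (- (norm v)\<^sup>2) * norm (u - v) powr (-\<alpha>)) \<partial>lborel)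
      \<le> (\<integral>\<^sup>+v. (\<Prod>b\<in>Basis. \<psi> b (v \<bullet> b)) \<partial>lborel)"
    by (rule nn_integral_mono) (rule dom)
  also have "\<dots> = (\<Prod>b\<in>Basis. (\<integral>\<^sup>+x. \<psi> b x \<partial>lborel))"
    by (rule nn_integral_lborel_prod) auto
  also have "\<dots> = (\<Prod>b\<in>Basis. (\<integral>\<^sup>+x. ennreal (exp (- x\<^sup>2) * \<bar>u \<bullet> b - x\<bar> powr (-\<beta>)) \<partial>lborel))"
  proof (rule prod.cong[OF refl], rule nn_integral_cong_AE)
    show "AE x in lborel. \<psi> b x = ennreal (exp (- x\<^sup>2) * \<bar>u \<bullet> b - x\<bar> powr (-\<beta>))" for b
      using AE_lborel_singleton[of "u \<bullet> b"] by eventually_elim (auto simp: \<psi>_def)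
  qed
  also have "\<dots> \<le> (\<Prod>b\<in>(Basis::'a set). ennreal (2/(1-\<beta>) + sqrt pi))"
    by (rule prod_mono_ennreal) (use nn_integral_exp_neg_square_abs_powr_le[OF \<beta>] in auto)
  also have "\<dots> = ennreal ((2/(1-\<alpha>/DIM('a)) + sqrt pi) ^ DIM('a))"
    using \<beta> by (simp add: ennreal_power \<beta>_def del: ennreal_plus)
  finally show ?thesis .
qed


lemma nn_integral_gauss:
  fixes y :: "'a::euclidean_space"
  assumes c: "c > 0"
  shows "(\<integral>\<^sup>+w. ennreal (exp (- (norm (w - y))\<^sup>2 / c)) \<partial>lborel) = ennreal (sqrt c ^ DIM('a) * sqrt pi ^ DIM('a))"
proof -
  have "(\<integral>\<^sup>+w. ennreal (exp (- (norm (w - y))\<^sup>2 / c)) \<partial>lborel)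
      = ennreal (sqrt c ^ DIM('a)) * (\<integral>\<^sup>+v. ennreal (exp (- (norm (y + sqrt c *\<^sub>R v - y))\<^sup>2 / c)) \<partial>lborel)"
    by (rule nn_integral_lborel_scale) (use c in auto)
  also have "(\<lambda>v. ennreal (exp (- (norm (y + sqrt c *\<^sub>R v - y))\<^sup>2 / c))) = (\<lambda>v. ennreal (exp (- (norm v)\<^sup>2)))"
    using c by (auto simp: power_mult_distrib)
  finally show ?thesis using c by (simp add: nn_integral_exp_neg_norm_square ennreal_mult)
qed

lemma nn_integral_gauss_norm_powr_le:
  fixes y u :: "'a::euclidean_space" and \<alpha> :: real
  assumes c: "c > 0" and \<alpha>: "0 < \<alpha>" "\<alpha> < DIM('a)"
  shows "(\<integral>\<^sup>+w. ennreal (exp (- (norm (w - y))\<^sup>2 / c) * norm (u - w) powr (-\<alpha>)) \<partial>lborel)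
    \<le> ennreal (sqrt c ^ DIM('a) * sqrt c powr (-\<alpha>) * (2/(1-\<alpha>/DIM('a)) + sqrt pi) ^ DIM('a))"
proof -
  define s where "s = sqrt c"
  have s: "s > 0" using c by (simp add: s_def)
  define u' where "u' = (1/s) *\<^sub>R (u - y)"
  have rescale: "exp (- (norm (y + s *\<^sub>R v - y))\<^sup>2 / c) * norm (u - (y + s *\<^sub>R v)) powr (-\<alpha>)
      = s powr (-\<alpha>) * (exp (- (norm v)\<^sup>2) * norm (u' - v) powr (-\<alpha>))" for v
  proof -
    have "u - (y + s *\<^sub>R v) = s *\<^sub>R (u' - v)" using s by (simp add: u'_def algebra_simps)
    hence "norm (u - (y + s *\<^sub>R v)) = s * norm (u' - v)" using s by simp
    moreover have "(norm (s *\<^sub>R v))\<^sup>2 / c = (norm v)\<^sup>2" using s c by (simp add: power_mult_distrib s_def)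
    ultimately show ?thesis using s by (simp add: powr_mult)
  qed
  have "(\<integral>\<^sup>+w. ennreal (exp (- (norm (w - y))\<^sup>2 / c) * norm (u - w) powr (-\<alpha>)) \<partial>lborel)
      = ennreal (s ^ DIM('a)) * (\<integral>\<^sup>+v. ennreal (exp (- (norm (y + s *\<^sub>R v - y))\<^sup>2 / c)
                                      * norm (u - (y + s *\<^sub>R v)) powr (-\<alpha>)) \<partial>lborel)"
    by (rule nn_integral_lborel_scale) (use s in auto)
  also have "\<dots> = ennreal (s ^ DIM('a)) * (ennreal (s powr (-\<alpha>))
                   * (\<integral>\<^sup>+v. ennreal (exp (- (norm v)\<^sup>2) * norm (u' - v) powr (-\<alpha>)) \<partial>lborel))"
    unfolding rescale by (subst nn_integral_cmult[symmetric]) (auto simp: ennreal_mult')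
  also have "\<dots> \<le> ennreal (s ^ DIM('a)) * (ennreal (s powr (-\<alpha>)) * ennreal ((2/(1-\<alpha>/DIM('a)) + sqrt pi) ^ DIM('a)))"
    by (intro mult_left_mono nn_integral_exp_neg_norm_square_norm_powr_le \<alpha>) auto
  also have "\<dots> = ennreal (sqrt c ^ DIM('a) * sqrt c powr (-\<alpha>) * (2/(1-\<alpha>/DIM('a)) + sqrt pi) ^ DIM('a))"
    using s \<alpha> by (simp add: ennreal_mult'[symmetric] s_def mult.assoc)
  finally show ?thesis .
qed

text \<open>The prefactor \<open>c\<^bsup>-(d+1)/2\<^esup>\<close> is the size of a first derivative of the heat kernel at time \<open>c\<close>.\<close>

lemma nn_integral_heat_gauss:
  fixes y :: "'a::euclidean_space"
  assumes c: "c > 0" and M: "M > 0"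
  shows "(\<integral>\<^sup>+w. ennreal (c powr (-(real DIM('a)+1)/2) * exp (- (norm (w - y))\<^sup>2 / (M*c))) \<partial>lborel)
      = ennreal (c powr (-1/2) * (sqrt (M*pi)) ^ DIM('a))"
proof -
  have Mc: "M*c > 0" using c M by simp
  have "(\<integral>\<^sup>+w. ennreal (c powr (-(real DIM('a)+1)/2) * exp (- (norm (w - y))\<^sup>2 / (M*c))) \<partial>lborel)
      = ennreal (c powr (-(real DIM('a)+1)/2)) * (\<integral>\<^sup>+w. ennreal (exp (- (norm (w - y))\<^sup>2 / (M*c))) \<partial>lborel)"
    by (subst nn_integral_cmult[symmetric]) (auto simp: ennreal_mult')
  also have "\<dots> = ennreal (c powr (-(real DIM('a)+1)/2) * (sqrt (M*c) ^ DIM('a) * sqrt pi ^ DIM('a)))"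
    by (subst nn_integral_gauss[OF Mc]) (simp add: ennreal_mult')
  also have "c powr (-(real DIM('a)+1)/2) * (sqrt (M*c) ^ DIM('a) * sqrt pi ^ DIM('a))
      = (c powr (-(real DIM('a)+1)/2) * c powr (real DIM('a)/2)) * (sqrt M ^ DIM('a) * sqrt pi ^ DIM('a))"
    using c M by (simp add: real_sqrt_mult power_mult_distrib powr_half_sqrt[symmetric] powr_power mult_ac)
  also have "\<dots> = c powr (-1/2) * (sqrt (M*pi)) ^ DIM('a)"
    by (simp add: powr_add[symmetric] field_simps real_sqrt_mult power_mult_distrib)
  finally show ?thesis .
qed

lemma nn_integral_heat_gauss_norm_powr_le:
  fixes y u :: "'a::euclidean_space" and \<alpha> :: real
  assumes c: "c > 0" and M: "M > 0" and \<alpha>: "0 < \<alpha>" "\<alpha> < DIM('a)"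
  shows "(\<integral>\<^sup>+w. ennreal (c powr (-(real DIM('a)+1)/2) * exp (- (norm (w - y))\<^sup>2 / (M*c)) * norm (u - w) powr (-\<alpha>)) \<partial>lborel)
      \<le> ennreal (c powr (-1/2 - \<alpha>/2) * (sqrt M ^ DIM('a) * sqrt M powr (-\<alpha>) * (2/(1-\<alpha>/DIM('a)) + sqrt pi) ^ DIM('a)))"
proof -
  have Mc: "M*c > 0" using c M by simp
  define J where "J = (2/(1-\<alpha>/DIM('a)) + sqrt pi) ^ DIM('a)"
  have "(\<integral>\<^sup>+w. ennreal (c powr (-(real DIM('a)+1)/2) * exp (- (norm (w - y))\<^sup>2 / (M*c)) * norm (u - w) powr (-\<alpha>)) \<partial>lborel)
      = ennreal (c powr (-(real DIM('a)+1)/2)) * (\<integral>\<^sup>+w. ennreal (exp (- (norm (w - y))\<^sup>2 / (M*c)) * norm (u - w) powr (-\<alpha>)) \<partial>lborel)"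
    by (subst nn_integral_cmult[symmetric]) (auto simp: ennreal_mult' mult.assoc)
  also have "\<dots> \<le> ennreal (c powr (-(real DIM('a)+1)/2)) * ennreal (sqrt (M*c) ^ DIM('a) * sqrt (M*c) powr (-\<alpha>) * J)"
    unfolding J_def by (intro mult_left_mono nn_integral_gauss_norm_powr_le Mc \<alpha>) auto
  also have "\<dots> = ennreal (c powr (-(real DIM('a)+1)/2) * (sqrt (M*c) ^ DIM('a) * sqrt (M*c) powr (-\<alpha>) * J))"
    by (simp add: ennreal_mult')
  also have "c powr (-(real DIM('a)+1)/2) * (sqrt (M*c) ^ DIM('a) * sqrt (M*c) powr (-\<alpha>) * J)
      = (c powr (-(real DIM('a)+1)/2) * c powr (real DIM('a)/2) * c powr (-\<alpha>/2)) * (sqrt M ^ DIM('a) * sqrt M powr (-\<alpha>) * J)"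
    using c M by (simp add: real_sqrt_mult power_mult_distrib powr_mult powr_half_sqrt[symmetric] powr_power powr_powr mult_ac)
  also have "\<dots> = c powr (-1/2 - \<alpha>/2) * (sqrt M ^ DIM('a) * sqrt M powr (-\<alpha>) * J)"
    by (simp add: powr_add[symmetric] field_simps)
  finally show ?thesis unfolding J_def .
qed

lemma le_exp_square_div_4: "0 \<le> (\<sigma>::real) \<Longrightarrow> \<sigma> \<le> exp (\<sigma>\<^sup>2/4)"
proof -
  have "\<sigma> \<le> 1 + \<sigma>\<^sup>2/4" using zero_le_power2[of "\<sigma> - 2"] by (simp add: power2_eq_square algebra_simps)
  thus ?thesis using exp_ge_add_one_self[of "\<sigma>\<^sup>2/4"] by linarith
qed

lemma one_plus_cube_mult_exp_le: "0 \<le> (\<sigma>::real) \<Longrightarrow> (1+\<sigma>)^3 * exp (-\<sigma>\<^sup>2/2) \<le> 27 * exp (-\<sigma>\<^sup>2/4)"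
proof -
  assume \<sigma>: "0 \<le> \<sigma>"
  define e where "e = exp (\<sigma>\<^sup>2/12)"
  have "\<sigma> \<le> 2 * (1 + \<sigma>\<^sup>2/12)" using zero_le_power2[of "\<sigma> - 3"] by (simp add: power2_eq_square algebra_simps)
  also have "\<dots> \<le> 2 * e" unfolding e_def by (rule mult_left_mono[OF exp_ge_add_one_self]) simp
  finally have "\<sigma> \<le> 2 * e" .
  moreover have "1 \<le> e" by (simp add: e_def)
  ultimately have "1 + \<sigma> \<le> 3 * e" by linarith
  hence "(1+\<sigma>)^3 \<le> (3*e)^3" by (rule power_mono) (use \<sigma> in simp)
  also have "(3*e)^3 = 27 * exp (\<sigma>\<^sup>2/4)"
    unfolding e_def by (simp add: power_mult_distrib exp_of_nat_mult[symmetric])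
  finally have "(1+\<sigma>)^3 * exp (-\<sigma>\<^sup>2/2) \<le> 27 * exp (\<sigma>\<^sup>2/4) * exp (-\<sigma>\<^sup>2/2)"
    by (rule mult_right_mono) simp
  also have "\<dots> = 27 * exp (-\<sigma>\<^sup>2/4)" by (simp add: mult.assoc exp_add[symmetric])
  finally show ?thesis .
qed

lemma exp_mult_cubic_le:
  fixes \<sigma> \<rho> d m :: real
  assumes "0 \<le> \<sigma>" "0 \<le> \<rho>" "0 \<le> d" "0 \<le> m"
  shows "exp (-\<sigma>\<^sup>2/2) * (\<rho> + \<sigma>*(\<sigma>*\<rho> + \<sigma>\<^sup>2*d/2 + m*d)) \<le> 27*(1+m)*exp (-\<sigma>\<^sup>2/4)*(\<rho>+d)"
proof -
  define T where "T = (1+\<sigma>)^3"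
  have T: "T = 1 + 3*\<sigma> + 3*\<sigma>\<^sup>2 + \<sigma>^3"
    unfolding T_def by (simp add: power3_eq_cube power2_eq_square algebra_simps)
  have s: "0 \<le> \<sigma>\<^sup>2" "0 \<le> \<sigma>^3" using assms by auto
  have "1 + \<sigma>\<^sup>2 \<le> (1+m)*T" and "\<sigma>^3/2 + m*\<sigma> \<le> (1+m)*T"
    using T s assms mult_left_mono[of \<sigma> T m] by (auto simp: algebra_simps)
  hence "\<rho> + \<sigma>*(\<sigma>*\<rho> + \<sigma>\<^sup>2*d/2 + m*d) \<le> (1+m)*(\<rho>+d)*T"
    using assms mult_left_mono[of "1 + \<sigma>\<^sup>2" "(1+m)*T" \<rho>] mult_left_mono[of "\<sigma>^3/2 + m*\<sigma>" "(1+m)*T" d]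
    by (simp add: power2_eq_square power3_eq_cube algebra_simps)
  hence "exp (-\<sigma>\<^sup>2/2) * (\<rho> + \<sigma>*(\<sigma>*\<rho> + \<sigma>\<^sup>2*d/2 + m*d)) \<le> (1+m)*(\<rho>+d) * (T * exp (-\<sigma>\<^sup>2/2))"
    by (simp add: mult_left_mono mult_ac)
  also have "\<dots> \<le> (1+m)*(\<rho>+d) * (27 * exp (-\<sigma>\<^sup>2/4))"
    using one_plus_cube_mult_exp_le[OF assms(1)] assms unfolding T_def by (intro mult_left_mono) auto
  finally show ?thesis by (simp add: algebra_simps)
qed

lemma powr_le_exp_mult:
  fixes X p R :: real
  assumes "0 \<le> X" "0 \<le> p" "p \<le> R"
  shows "X powr p \<le> exp (R * X)"
proof (cases "X \<le> 1")
  case True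
  hence "X powr p \<le> 1" using assms by (cases "X = 0") (auto intro: powr_le1)
  also have "1 \<le> exp (R * X)" using assms by simp
  finally show ?thesis .
next
  case False
  hence "X powr p \<le> X powr R" using assms by (intro powr_mono) auto
  also have "\<dots> = exp (R * ln X)" using False by (simp add: powr_def)
  also have "\<dots> \<le> exp (R * X)"
    using False assms by (intro exp_mono mult_left_mono ln_le_minus_one[THEN order_trans]) auto
  finally show ?thesis .
qed

text \<open>The weight is absorbed by completing the square: \<open>2R|v| \<le> |v|\<^sup>2/(2Mc) + 2R\<^sup>2Mc\<close>.\<close>

lemma powr_exp_mult_gauss_le:
  fixes u v :: "'a::real_normed_vector"
  assumes p: "0 \<le> p" "p \<le> R" and r: "0 \<le> r" "r \<le> R" and uv: "norm (u - v) \<le> H"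
    and c: "0 < c" "c \<le> K" and M: "0 < M"
  shows "norm u powr p * exp (r * norm u) * exp (- (norm v)\<^sup>2 / (M*c))
    \<le> exp (2*R*H + 2*R\<^sup>2*M*K) * exp (- (norm v)\<^sup>2 / (2*M*c))"
proof -
  define s where "s = norm v"
  have u: "norm u \<le> s + H" unfolding s_def using norm_triangle_ineq[of v "u - v"] uv by simp
  have "norm u powr p * exp (r * norm u) \<le> exp (R * norm u) * exp (R * norm u)"
    using p r by (intro mult_mono powr_le_exp_mult) (auto intro!: mult_right_mono)
  also have "\<dots> \<le> exp (2*R*(s + H))"
    using u p by (auto simp: exp_add[symmetric] intro!: mult_left_mono)
  finally have weight: "norm u powr p * exp (r * norm u) \<le> exp (2*R*(s + H))" .
  have "0 \<le> (s - 2*R*M*c)\<^sup>2/(2*M*c)" using c M by simp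
  also have "(s - 2*R*M*c)\<^sup>2/(2*M*c) = s\<^sup>2/(2*M*c) - 2*R * s + 2*R\<^sup>2*M*c"
    using c M by (simp add: field_simps power2_eq_square)
  finally have "2*R * s \<le> s\<^sup>2/(2*M*c) + 2*R\<^sup>2*M*c" by simp
  moreover have "2*R\<^sup>2*M*c \<le> 2*R\<^sup>2*M*K" using c M by (intro mult_left_mono) auto
  moreover have "- s\<^sup>2/(M*c) = - 2*(s\<^sup>2/(2*M*c))" using c M by (simp add: field_simps)
  ultimately have "2*R*(s + H) + - s\<^sup>2/(M*c) \<le> 2*R*H + 2*R\<^sup>2*M*K + - s\<^sup>2/(2*M*c)"
    by (simp add: algebra_simps)
  hence "exp (2*R*(s + H)) * exp (- s\<^sup>2/(M*c)) \<le> exp (2*R*H + 2*R\<^sup>2*M*K) * exp (- s\<^sup>2/(2*M*c))"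
    by (simp add: exp_add[symmetric])
  with weight show ?thesis unfolding s_def
    by (elim order_trans[rotated]) (intro mult_right_mono, auto)
qed

lemma exp_neg_power2_div_mono:
  fixes y c d :: real
  assumes "0 < c" "c \<le> d"
  shows "exp (- y\<^sup>2 / c) \<le> exp (- y\<^sup>2 / d)"
  using assms by (simp add: divide_left_mono)

lemma exp_neg_power2_le_of_powr_less:
  fixes y a b \<eta> \<kappa> :: real
  assumes a: "0 < a" "a \<le> b" and y: "b powr (1/2 - \<eta>) < y" and \<kappa>: "0 < \<kappa>"
  shows "exp (- y\<^sup>2/(\<kappa>*a)) \<le> exp (- (b powr (-2*\<eta>))/\<kappa>)"
proof -
  have b: "0 < b" using a by simp
  have "b powr (1 - 2*\<eta>) = (b powr (1/2 - \<eta>))\<^sup>2"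
    by (simp add: powr_power[symmetric] algebra_simps power2_eq_square powr_add[symmetric])
  also have "\<dots> \<le> y\<^sup>2" using y by (intro power_mono) auto
  finally have "b powr (1 - 2*\<eta>) / b \<le> y\<^sup>2 / b" using b by (simp add: divide_right_mono)
  moreover have "b powr (1 - 2*\<eta>) / b = b powr (-2*\<eta>)"
    using b powr_diff[of b "1 - 2*\<eta>" 1] by simp
  moreover have "y\<^sup>2 / b \<le> y\<^sup>2 / a" using a by (intro divide_left_mono) auto
  ultimately have "b powr (-2*\<eta>)/\<kappa> \<le> y\<^sup>2/(\<kappa>*a)" using \<kappa> by (simp add: field_simps)
  thus ?thesis by simp
qed

section \<open>Pointwise bounds for the heat kernel\<close>

lemma two_pi_powr_neg_le_one: "0 \<le> n \<Longrightarrow> (2*pi) powr (- n / 2) \<le> 1"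
  using ge_one_powr_ge_zero[of "2*pi" "n/2"] pi_gt3 by (simp add: powr_minus_divide)

lemma sqrt_eq_exp_ln_half: "c > 0 \<Longrightarrow> sqrt c = exp (ln c / 2)"
  by (simp add: powr_half_sqrt[symmetric] powr_def)

lemma heat_kernel_d_eq_exp:
  fixes y :: "real^'q"
  assumes c: "c > 0"
  shows "heat_kernel_d c l y = - ((2*pi) powr (- real CARD('q) / 2)) * y $ l
            * exp (- (norm y)\<^sup>2 / (2*c) - (real CARD('q)/2 + 1) * ln c)"
proof -
  define k where "k = (2*pi) powr (- real CARD('q) / 2)"
  define P where "P = exp ((- real CARD('q) / 2) * ln c)"
  define E where "E = exp (- (norm y)\<^sup>2 / (2*c))"
  have "(2*pi*c) powr (- real CARD('q) / 2) = k * P"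
    using c by (simp add: k_def P_def powr_mult powr_def[of c])
  hence "heat_kernel_d c l y = - k * y $ l * (E * (P / c))"
    by (simp add: heat_kernel_d_def heat_kernel_def E_def field_simps)
  moreover have "P / c = exp (- (real CARD('q)/2 + 1) * ln c)"
  proof -
    have "exp (- (real CARD('q)/2 + 1) * ln c) = exp ((- real CARD('q) / 2) * ln c) / exp (ln c)"
      unfolding exp_diff[symmetric] by (simp add: algebra_simps)
    thus ?thesis using c by (simp add: P_def)
  qed
  ultimately show ?thesis by (simp add: k_def E_def exp_add[symmetric] algebra_simps)
qed

lemma abs_heat_kernel_d_le:
  fixes y :: "real^'q"
  assumes c: "c > 0"
  shows "\<bar>heat_kernel_d c l y\<bar> \<le> c powr (- (real CARD('q) + 1) / 2) * exp (- (norm y)\<^sup>2 / (4*c))"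
proof -
  define n where "n = real CARD('q)"
  define k where "k = (2*pi) powr (- n / 2)"
  define \<sigma> where "\<sigma> = norm y / sqrt c"
  define L where "L = exp (- (n/2 + 1) * ln c)"
  have k: "0 \<le> k" "k \<le> 1" using two_pi_powr_neg_le_one[of n] by (auto simp: k_def n_def)
  have \<sigma>: "0 \<le> \<sigma>" "norm y = \<sigma> * sqrt c" using c by (auto simp: \<sigma>_def)
  have sq: "- (norm y)\<^sup>2 / (2*c) = - \<sigma>\<^sup>2/2" "- (norm y)\<^sup>2 / (4*c) = - \<sigma>\<^sup>2/4"
    using c by (simp_all add: \<sigma>(2) power_mult_distrib)
  have "\<bar>heat_kernel_d c l y\<bar> = k * \<bar>y $ l\<bar> * exp (- (norm y)\<^sup>2 / (2*c)) * L"
    using c k by (simp add: heat_kernel_d_eq_exp abs_mult k_def n_def L_def exp_add[symmetric] algebra_simps)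
  also have "\<dots> \<le> 1 * norm y * exp (- (norm y)\<^sup>2 / (2*c)) * L"
    using k by (intro mult_right_mono mult_mono component_le_norm_cart) (auto simp: L_def)
  also have "\<dots> = sqrt c * L * (\<sigma> * exp (-\<sigma>\<^sup>2/4)) * exp (-\<sigma>\<^sup>2/4)"
    unfolding sq by (simp add: \<sigma>(2) mult_exp_exp algebra_simps)
  also have "\<dots> \<le> sqrt c * L * 1 * exp (-\<sigma>\<^sup>2/4)"
    using le_exp_square_div_4[OF \<sigma>(1)] c
    by (intro mult_right_mono mult_left_mono) (auto simp: L_def exp_minus field_simps)
  also have "sqrt c * L = c powr (- (n + 1) / 2)"
    using c by (simp add: sqrt_eq_exp_ln_half L_def powr_def exp_add[symmetric] field_simps)
  finally show ?thesis unfolding sq(2) n_def by simp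
qed

lemma norm_diff_scaleR_power2:
  fixes u h :: "'a::real_inner"
  shows "(norm (u - \<tau> *\<^sub>R h))\<^sup>2 = (norm u)\<^sup>2 - 2*\<tau>*(u \<bullet> h) + \<tau>\<^sup>2*(norm h)\<^sup>2"
  unfolding power2_norm_eq_inner
  by (simp add: inner_diff_left inner_diff_right inner_commute power2_eq_square algebra_simps)

lemma has_real_derivative_gauss_exponent:
  fixes Q0 Q1 Q2 a \<delta> \<tau> m :: real
  assumes c: "a + \<tau>*\<delta> > 0"
  shows "((\<lambda>\<tau>. -(Q0 - 2*\<tau>*Q1 + \<tau>\<^sup>2*Q2)/(2*(a+\<tau>*\<delta>)) - m*ln(a+\<tau>*\<delta>)) has_real_derivative
      (((2*Q1 - 2*\<tau>*Q2)*(2*(a+\<tau>*\<delta>)) - (-(Q0 - 2*\<tau>*Q1 + \<tau>\<^sup>2*Q2))*(2*\<delta>))/((2*(a+\<tau>*\<delta>))*(2*(a+\<tau>*\<delta>)))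
        - m*\<delta>/(a+\<tau>*\<delta>))) (at \<tau>)"
proof -
  have "((\<lambda>\<tau>. -(Q0 - 2*\<tau>*Q1 + \<tau>\<^sup>2*Q2)) has_real_derivative (2*Q1 - 2*\<tau>*Q2)) (at \<tau>)"
    by (auto intro!: derivative_eq_intros simp: algebra_simps)
  moreover have "((\<lambda>\<tau>. 2*(a+\<tau>*\<delta>)) has_real_derivative (2*\<delta>)) (at \<tau>)"
    by (auto intro!: derivative_eq_intros)
  ultimately have "((\<lambda>\<tau>. -(Q0 - 2*\<tau>*Q1 + \<tau>\<^sup>2*Q2)/(2*(a+\<tau>*\<delta>))) has_real_derivative
      (((2*Q1 - 2*\<tau>*Q2)*(2*(a+\<tau>*\<delta>)) - (-(Q0 - 2*\<tau>*Q1 + \<tau>\<^sup>2*Q2))*(2*\<delta>))/((2*(a+\<tau>*\<delta>))*(2*(a+\<tau>*\<delta>))))) (at \<tau>)"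
    using c by (intro DERIV_divide) auto
  moreover have "((\<lambda>\<tau>. m*ln(a+\<tau>*\<delta>)) has_real_derivative (m*\<delta>/(a+\<tau>*\<delta>))) (at \<tau>)"
    using c by (auto intro!: derivative_eq_intros)
  ultimately show ?thesis by (rule DERIV_diff)
qed

text \<open>\<open>y\<close> is a point on the segment and \<open>c\<close> the corresponding time; \<open>(y\<bullet>h)/c + |y|\<^sup>2\<delta>/(2c\<^sup>2) - m\<delta>/c\<close>
  is the derivative of the exponent \<open>-|y|\<^sup>2/(2c) - m ln c\<close> of the kernel along the segment.\<close>

lemma heat_kernel_path_derivative_le:
  fixes y h :: "real^'q"
  assumes c: "0 < c" and \<delta>: "0 \<le> \<delta>"
  defines "m \<equiv> real CARD('q)/2 + 1"
  shows "\<bar>- h $ l + y $ l * ((y \<bullet> h)/c + (norm y)\<^sup>2*\<delta>/(2*c\<^sup>2) - m*\<delta>/c)\<bar> * exp (-(norm y)\<^sup>2/(2*c) - m * ln c)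
     \<le> 27*(m+1) * c powr (-(real CARD('q)+1)/2) * exp (-(norm y)\<^sup>2/(4*c)) * (norm h / sqrt c + \<delta>/c)"
proof -
  define Y where "Y = norm y"
  define H where "H = norm h"
  define \<sigma> where "\<sigma> = Y / sqrt c"
  define \<rho> where "\<rho> = H / sqrt c"
  define d where "d = \<delta> / c"
  have pos: "0 \<le> \<sigma>" "0 \<le> \<rho>" "0 \<le> d" "0 \<le> m" using c \<delta> by (auto simp: \<sigma>_def \<rho>_def d_def Y_def H_def m_def)
  have sq: "-Y\<^sup>2/(2*c) = -\<sigma>\<^sup>2/2" "-Y\<^sup>2/(4*c) = -\<sigma>\<^sup>2/4" using c by (auto simp: \<sigma>_def power_divide)
  have "\<bar>(y \<bullet> h)/c\<bar> \<le> Y*H/c"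
    using Cauchy_Schwarz_ineq2[of y h] c by (simp add: Y_def H_def divide_right_mono)
  moreover have "0 \<le> Y\<^sup>2*\<delta>/(2*c\<^sup>2)" "0 \<le> m*\<delta>/c" using c \<delta> pos by auto
  ultimately have "\<bar>(y \<bullet> h)/c + Y\<^sup>2*\<delta>/(2*c\<^sup>2) - m*\<delta>/c\<bar> \<le> Y*H/c + Y\<^sup>2*\<delta>/(2*c\<^sup>2) + m*\<delta>/c"
    by linarith
  hence "\<bar>- h $ l + y $ l * ((y \<bullet> h)/c + Y\<^sup>2*\<delta>/(2*c\<^sup>2) - m*\<delta>/c)\<bar> \<le> H + Y*(Y*H/c + Y\<^sup>2*\<delta>/(2*c\<^sup>2) + m*\<delta>/c)"
    using component_le_norm_cart[of h l] component_le_norm_cart[of y l]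
    by (intro order_trans[OF abs_triangle_ineq] add_mono)
       (auto simp: abs_mult Y_def H_def intro!: mult_mono)
  also have "H + Y*(Y*H/c + Y\<^sup>2*\<delta>/(2*c\<^sup>2) + m*\<delta>/c) = sqrt c * (\<rho> + \<sigma>*(\<sigma>*\<rho> + \<sigma>\<^sup>2*d/2 + m*d))"
    using c by (simp add: \<sigma>_def \<rho>_def d_def field_simps power2_eq_square real_sqrt_mult[symmetric])
  finally have "\<bar>- h $ l + y $ l * ((y \<bullet> h)/c + Y\<^sup>2*\<delta>/(2*c\<^sup>2) - m*\<delta>/c)\<bar> * exp (-Y\<^sup>2/(2*c))
      \<le> sqrt c * (exp (-\<sigma>\<^sup>2/2) * (\<rho> + \<sigma>*(\<sigma>*\<rho> + \<sigma>\<^sup>2*d/2 + m*d)))"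
    unfolding sq by (simp add: mult_right_mono mult_ac)
  also have "\<dots> \<le> sqrt c * (27*(1+m)*exp (-\<sigma>\<^sup>2/4)*(\<rho>+d))"
    using exp_mult_cubic_le[OF pos] c by (intro mult_left_mono) auto
  finally have "\<bar>- h $ l + y $ l * ((y \<bullet> h)/c + Y\<^sup>2*\<delta>/(2*c\<^sup>2) - m*\<delta>/c)\<bar> * exp (-Y\<^sup>2/(2*c) - m * ln c)
      \<le> 27*(m+1) * (sqrt c * exp (- m * ln c)) * exp (-\<sigma>\<^sup>2/4) * (\<rho>+d)"
    by (simp add: exp_diff exp_minus field_simps)
  also have "sqrt c * exp (- m * ln c) = c powr (-(real CARD('q)+1)/2)"
    using c by (simp add: sqrt_eq_exp_ln_half m_def powr_def exp_add[symmetric] field_simps)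
  finally show ?thesis unfolding sq(2)[symmetric] by (simp add: Y_def H_def \<rho>_def d_def)
qed

lemma gauss_exponent_at_segment_point:
  fixes u h y :: "'a::real_inner"
  assumes c: "c = a + z*\<delta>" "c > 0" and y: "y = u - z *\<^sub>R h"
  shows "(norm u)\<^sup>2 - 2*z*(u \<bullet> h) + z\<^sup>2*(norm h)\<^sup>2 = (norm y)\<^sup>2"
    and "((2*(u \<bullet> h) - 2*z*(norm h)\<^sup>2)*(2*c) - (-((norm u)\<^sup>2 - 2*z*(u \<bullet> h) + z\<^sup>2*(norm h)\<^sup>2))*(2*\<delta>))
           / ((2*c)*(2*c)) - m*\<delta>/c
         = (y \<bullet> h)/c + (norm y)\<^sup>2*\<delta>/(2*c\<^sup>2) - m*\<delta>/c"
proof -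
  show sq: "(norm u)\<^sup>2 - 2*z*(u \<bullet> h) + z\<^sup>2*(norm h)\<^sup>2 = (norm y)\<^sup>2"
    by (simp add: y norm_diff_scaleR_power2)
  have "u \<bullet> h - z*(norm h)\<^sup>2 = y \<bullet> h" by (simp add: y inner_diff_left power2_norm_eq_inner)
  with sq c(2) show "((2*(u \<bullet> h) - 2*z*(norm h)\<^sup>2)*(2*c) - (-((norm u)\<^sup>2 - 2*z*(u \<bullet> h) + z\<^sup>2*(norm h)\<^sup>2))*(2*\<delta>))
           / ((2*c)*(2*c)) - m*\<delta>/c
         = (y \<bullet> h)/c + (norm y)\<^sup>2*\<delta>/(2*c\<^sup>2) - m*\<delta>/c"
    by (simp add: field_simps power2_eq_square)
qed

lemma heat_kernel_d_increment_mvt: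
  fixes u h :: "real^'q"
  assumes a: "a > 0" and ab: "a \<le> b"
  obtains \<tau> where "0 \<le> \<tau>" "\<tau> \<le> 1"
    "\<bar>heat_kernel_d a l u - heat_kernel_d b l (u - h)\<bar>
      \<le> 27*(real CARD('q)/2 + 2) * (a+\<tau>*(b-a)) powr (-(real CARD('q)+1)/2)
         * exp (-(norm (u - \<tau> *\<^sub>R h))\<^sup>2/(4*(a+\<tau>*(b-a))))
         * (norm h / sqrt (a+\<tau>*(b-a)) + (b-a)/(a+\<tau>*(b-a)))"
proof -
  define \<delta> where "\<delta> = b - a"
  define Q0 where "Q0 = (norm u)\<^sup>2"
  define Q1 where "Q1 = u \<bullet> h"
  define Q2 where "Q2 = (norm h)\<^sup>2"
  define m where "m = real CARD('q)/2 + 1"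
  define k where "k = (2*pi) powr (- real CARD('q) / 2)"
  define M where "M \<tau> = -(Q0 - 2*\<tau>*Q1 + \<tau>\<^sup>2*Q2)/(2*(a+\<tau>*\<delta>)) - m*ln(a+\<tau>*\<delta>)" for \<tau>
  define M' where "M' \<tau> = ((2*Q1 - 2*\<tau>*Q2)*(2*(a+\<tau>*\<delta>)) - (-(Q0 - 2*\<tau>*Q1 + \<tau>\<^sup>2*Q2))*(2*\<delta>))
                         /((2*(a+\<tau>*\<delta>))*(2*(a+\<tau>*\<delta>))) - m*\<delta>/(a+\<tau>*\<delta>)" for \<tau>
  \<comment> \<open>Up to the factor \<open>-k\<close>, \<open>G \<tau>\<close> is the kernel at time \<open>a + \<tau>\<delta>\<close> and position \<open>u - \<tau>h\<close>.\<close>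
  define G where "G \<tau> = (u $ l - \<tau> * h $ l) * exp (M \<tau>)" for \<tau>
  define G' where "G' \<tau> = (- h $ l + (u $ l - \<tau> * h $ l) * M' \<tau>) * exp (M \<tau>)" for \<tau>
  have \<delta>: "0 \<le> \<delta>" using ab by (simp add: \<delta>_def)
  have k: "0 \<le> k" "k \<le> 1" using two_pi_powr_neg_le_one[of "real CARD('q)"] by (auto simp: k_def)
  have cpos: "a + \<tau>*\<delta> > 0" if "0 \<le> \<tau>" for \<tau>
    using a \<delta> that by (simp add: add_pos_nonneg)
  have G: "heat_kernel_d (a+\<tau>*\<delta>) l (u - \<tau> *\<^sub>R h) = - k * G \<tau>" if "0 \<le> \<tau>" for \<tau>
    unfolding heat_kernel_d_eq_exp[OF cpos[OF that]] G_def M_def k_def m_def norm_diff_scaleR_power2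
      Q0_def Q1_def Q2_def by simp
  have "(G has_real_derivative G' \<tau>) (at \<tau>)" if "0 \<le> \<tau>" for \<tau>
  proof -
    have "(M has_real_derivative M' \<tau>) (at \<tau>)"
      unfolding M_def M'_def by (rule has_real_derivative_gauss_exponent[OF cpos[OF that]])
    thus ?thesis unfolding G_def G'_def by (auto intro!: derivative_eq_intros simp: algebra_simps)
  qed
  then obtain z where z: "0 < z" "z < 1" "G 1 - G 0 = (1 - 0) * G' z"
    using MVT2[of 0 1 G G'] by auto
  define c where "c = a + z*\<delta>"
  define y where "y = u - z *\<^sub>R h"
  have c: "c > 0" using cpos[of z] z by (simp add: c_def)
  have "heat_kernel_d a l u - heat_kernel_d b l (u - h) = k * G' z"
    using G[of 0] G[of 1] z(3) by (simp add: \<delta>_def algebra_simps)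
  hence "\<bar>heat_kernel_d a l u - heat_kernel_d b l (u - h)\<bar> \<le> \<bar>G' z\<bar>"
    using k by (simp add: abs_mult mult_left_le_one_le)
  also have "G' z = (- h $ l + y $ l * ((y \<bullet> h)/c + (norm y)\<^sup>2*\<delta>/(2*c\<^sup>2) - m*\<delta>/c))
                     * exp (-(norm y)\<^sup>2/(2*c) - m * ln c)"
    using gauss_exponent_at_segment_point[OF c_def c y_def]
    unfolding G'_def M_def M'_def c_def[symmetric] Q0_def Q1_def Q2_def by (simp add: y_def)
  also have "\<bar>\<dots>\<bar> \<le> 27*(m+1) * c powr (-(real CARD('q)+1)/2) * exp (-(norm y)\<^sup>2/(4*c)) * (norm h / sqrt c + \<delta>/c)"
    using heat_kernel_path_derivative_le[OF c \<delta>, of h l y] by (simp add: abs_mult m_def)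
  finally show ?thesis
    using z that[of z] by (simp add: m_def c_def y_def \<delta>_def algebra_simps)
qed

lemma abs_heat_kernel_d_diff_le_near:
  fixes u h :: "real^'q"
  assumes a: "a > 0" and ab: "a \<le> b" and b2: "b \<le> 2*a" and ha: "(norm h)\<^sup>2 \<le> a"
  obtains y where "norm (u - y) \<le> norm h"
    "\<bar>heat_kernel_d a l u - heat_kernel_d b l (u - h)\<bar>
      \<le> 27*(real CARD('q)/2 + 2) * a powr (-(real CARD('q)+1)/2) * exp (-(norm y)\<^sup>2/(8*a))
         * (norm h / sqrt a + (b-a)/a)"
proof -
  obtain \<tau> where \<tau>: "0 \<le> \<tau>" "\<tau> \<le> 1" and D:
    "\<bar>heat_kernel_d a l u - heat_kernel_d b l (u - h)\<bar>
      \<le> 27*(real CARD('q)/2 + 2) * (a+\<tau>*(b-a)) powr (-(real CARD('q)+1)/2)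
         * exp (-(norm (u - \<tau> *\<^sub>R h))\<^sup>2/(4*(a+\<tau>*(b-a))))
         * (norm h / sqrt (a+\<tau>*(b-a)) + (b-a)/(a+\<tau>*(b-a)))"
    using heat_kernel_d_increment_mvt[OF a ab] by blast
  define c where "c = a+\<tau>*(b-a)"
  have ca: "a \<le> c" using \<tau> ab by (simp add: c_def)
  have cb: "c \<le> b" using mult_right_mono[OF \<tau>(2), of "b-a"] ab by (simp add: c_def)
  have "c powr (-(real CARD('q)+1)/2) \<le> a powr (-(real CARD('q)+1)/2)"
    by (rule powr_mono2') (use a ca in auto)
  moreover have "exp (-(norm (u - \<tau> *\<^sub>R h))\<^sup>2/(4*c)) \<le> exp (-(norm (u - \<tau> *\<^sub>R h))\<^sup>2/(8*a))"
    by (rule exp_neg_power2_div_mono) (use a ca cb b2 in auto)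
  moreover have "norm h / sqrt c + (b-a)/c \<le> norm h / sqrt a + (b-a)/a"
    using a ca ab by (intro add_mono divide_left_mono) (auto intro: mult_pos_pos)
  ultimately have "\<bar>heat_kernel_d a l u - heat_kernel_d b l (u - h)\<bar>
      \<le> 27*(real CARD('q)/2 + 2) * a powr (-(real CARD('q)+1)/2) * exp (-(norm (u - \<tau> *\<^sub>R h))\<^sup>2/(8*a))
         * (norm h / sqrt a + (b-a)/a)"
    using D a ca ab unfolding c_def[symmetric]
    by (elim order_trans) (intro mult_mono, auto intro!: add_nonneg_nonneg divide_nonneg_nonneg)
  moreover have "norm (u - (u - \<tau> *\<^sub>R h)) \<le> norm h" using \<tau> by (simp add: mult_left_le_one_le)
  ultimately show ?thesis using that by blast
qed

text \<open>\<open>increment_factor a b |h|\<close> is the relative size of the increment between the kernels at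
  \<open>(a, u)\<close> and \<open>(b, u - h)\<close>; the value \<open>1\<close> covers the regime where they are bounded separately.\<close>

definition increment_factor :: "real \<Rightarrow> real \<Rightarrow> real \<Rightarrow> real" where
  "increment_factor a b H = (if b \<le> 2*a \<and> H\<^sup>2 \<le> a then H / sqrt a + (b - a)/a else 1)"

definition gauss_majorant :: "real \<Rightarrow> real \<Rightarrow> real \<Rightarrow> real^'q \<Rightarrow> real^'q \<Rightarrow> real" where
  "gauss_majorant M a b u v =
     a powr (-(real CARD('q)+1)/2) * exp (-(norm u)\<^sup>2/(M*a)) + b powr (-(real CARD('q)+1)/2) * exp (-(norm v)\<^sup>2/(M*b))"

lemma increment_factor_nonneg: "0 < a \<Longrightarrow> a \<le> b \<Longrightarrow> 0 \<le> H \<Longrightarrow> 0 \<le> increment_factor a b H"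
  by (simp add: increment_factor_def)

lemma gauss_majorant_nonneg: "0 \<le> gauss_majorant M a b u v"
  by (simp add: gauss_majorant_def)

lemma abs_heat_kernel_d_diff_le:
  fixes u h :: "real^'q"
  assumes a: "a > 0" and ab: "a \<le> b"
  shows "\<bar>heat_kernel_d a l u - heat_kernel_d b l (u - h)\<bar>
    \<le> 27*(real CARD('q)/2 + 2)*exp (1/8) * increment_factor a b (norm h) * gauss_majorant 16 a b u (u - h)"
    (is "?D \<le> ?K * ?S * ?G")
proof -
  have b: "0 < b" using a ab by simp
  have K: "27*(real CARD('q)/2 + 2) \<le> ?K" by simp
  have K1: "1 \<le> ?K" by (rule order_trans[OF _ K]) simp
  show ?thesis
  proof (cases "b \<le> 2*a \<and> (norm h)\<^sup>2 \<le> a")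
    case True
    hence S: "?S = norm h / sqrt a + (b-a)/a" by (simp add: increment_factor_def)
    obtain y where y: "norm (u - y) \<le> norm h" and D:
      "?D \<le> 27*(real CARD('q)/2 + 2) * a powr (-(real CARD('q)+1)/2) * exp (-(norm y)\<^sup>2/(8*a)) * ?S"
      using abs_heat_kernel_d_diff_le_near[OF a ab, of h u l] True S by auto
    have "norm u \<le> norm y + norm h" using y norm_triangle_ineq[of y "u - y"] by simp
    hence "(norm u)\<^sup>2 \<le> (norm y + norm h)\<^sup>2" by (intro power_mono) auto
    also have "\<dots> \<le> 2*(norm y)\<^sup>2 + 2*(norm h)\<^sup>2"
      using sum_squares_bound[of "norm y" "norm h"] by (simp add: power2_sum algebra_simps)
    finally have "-(norm y)\<^sup>2/(8*a) \<le> 1/8 + -(norm u)\<^sup>2/(16*a)" using True a by (simp add: field_simps)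
    hence "exp (-(norm y)\<^sup>2/(8*a)) \<le> exp (1/8) * exp (-(norm u)\<^sup>2/(16*a))"
      by (simp add: exp_add[symmetric])
    hence "?D \<le> 27*(real CARD('q)/2 + 2) * a powr (-(real CARD('q)+1)/2)
                 * (exp (1/8) * exp (-(norm u)\<^sup>2/(16*a))) * ?S"
      using D increment_factor_nonneg[OF a ab, of "norm h"]
      by (elim order_trans) (intro mult_right_mono mult_left_mono, auto)
    also have "\<dots> = ?K * ?S * (a powr (-(real CARD('q)+1)/2) * exp (-(norm u)\<^sup>2/(16*a)))"
      by (simp add: mult_ac)
    also have "\<dots> \<le> ?K * ?S * ?G"
      using S a ab by (intro mult_left_mono) (auto simp: gauss_majorant_def)
    finally show ?thesis .
  next
    case False
    hence S: "?S = 1" unfolding increment_factor_def by (rule if_not_P)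
    have "?D \<le> \<bar>heat_kernel_d a l u\<bar> + \<bar>heat_kernel_d b l (u - h)\<bar>" by (rule abs_triangle_ineq4)
    also have "\<dots> \<le> ?G"
      unfolding gauss_majorant_def using a b
      by (intro add_mono abs_heat_kernel_d_le[THEN order_trans] mult_left_mono exp_neg_power2_div_mono) auto
    also have "\<dots> \<le> ?K * ?S * ?G" unfolding S using mult_right_mono[OF K1 gauss_majorant_nonneg] by simp
    finally show ?thesis .
  qed
qed

lemma abs_heat_kernel_d_diff_le_far:
  fixes u h :: "real^'q"
  assumes a: "a > 0" and ab: "a \<le> b" and ub: "b powr (1/2 - \<eta>) < norm u" and uh: "2 * norm h < norm u"
  shows "\<bar>heat_kernel_d a l u - heat_kernel_d b l (u - h)\<bar>
    \<le> 27*(real CARD('q)/2 + 2)*exp (1/8) * increment_factor a b (norm h)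
       * exp (- (b powr (-2*\<eta>))/128) * gauss_majorant 32 a b u (u - h)"
proof -
  define E where "E = exp (- (b powr (-2*\<eta>))/128)"
  have b: "0 < b" using a ab by simp
  have half: "exp (- y\<^sup>2/(16*c)) = exp (- y\<^sup>2/(32*c)) * exp (- y\<^sup>2/(32*c))" for y c :: real
    by (simp add: mult_exp_exp)
  have "exp (- (norm u)\<^sup>2/(32*a)) \<le> exp (- (norm u)\<^sup>2/(128*a))"
    using a by (intro exp_neg_power2_div_mono) auto
  also have "\<dots> \<le> E" unfolding E_def by (rule exp_neg_power2_le_of_powr_less[OF a ab ub]) simp
  finally have Ea: "exp (- (norm u)\<^sup>2/(32*a)) \<le> E" .
  have "norm u \<le> 2 * norm (u - h)" using norm_triangle_ineq2[of u h] uh by linarith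
  hence "(norm u)\<^sup>2 \<le> 4 * (norm (u - h))\<^sup>2" using power_mono[of "norm u" "2 * norm (u - h)" 2] by simp
  hence "exp (- (norm (u - h))\<^sup>2/(32*b)) \<le> exp (- (norm u)\<^sup>2/(128*b))" using b by (simp add: field_simps)
  also have "\<dots> \<le> E" unfolding E_def by (rule exp_neg_power2_le_of_powr_less[OF b order_refl ub]) simp
  finally have Eb: "exp (- (norm (u - h))\<^sup>2/(32*b)) \<le> E" .
  have absorb: "p * (e * e) \<le> E * (p * e)" if "e \<le> E" "0 \<le> e" "0 \<le> p" for p e :: real
    using mult_left_mono[OF mult_right_mono[OF that(1,2)] that(3)] by (simp add: mult_ac)
  have "gauss_majorant 16 a b u (u - h) \<le> E * gauss_majorant 32 a b u (u - h)"
    unfolding gauss_majorant_def half distrib_left by (intro add_mono absorb Ea Eb) auto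
  with abs_heat_kernel_d_diff_le[OF a ab, of l u h] show ?thesis
    unfolding E_def using increment_factor_nonneg[OF a ab, of "norm h"]
    by (elim order_trans) (auto intro!: mult_left_mono simp: mult_ac)
qed

lemma powr_exp_mult_gauss_majorant_le:
  fixes u h :: "real^'q"
  assumes p: "0 \<le> p" "p \<le> R" and r: "0 \<le> r" "r \<le> R" and h: "norm h \<le> H"
    and a: "0 < a" "a \<le> b" "b \<le> K" and M: "0 < M"
  shows "norm u powr p * exp (r * norm u) * gauss_majorant M a b u (u - h)
    \<le> exp (2*R*H + 2*R\<^sup>2*M*K) * gauss_majorant (2*M) a b u (u - h)"
proof -
  have "norm u powr p * exp (r * norm u) * exp (- (norm v)\<^sup>2 / (M*c))
      \<le> exp (2*R*H + 2*R\<^sup>2*M*K) * exp (- (norm v)\<^sup>2 / (2*M*c))"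
    if "v = u \<or> v = u - h" "c = a \<or> c = b" for v c
    using that h a norm_ge_zero[of h]
    by (intro powr_exp_mult_gauss_le[OF p r _ _ _ M]) (auto simp del: norm_ge_zero)
  note W = this
  show ?thesis
    using mult_left_mono[OF W[of u a], of "a powr (-(real CARD('q)+1)/2)"]
      mult_left_mono[OF W[of "u - h" b], of "b powr (-(real CARD('q)+1)/2)"]
    unfolding gauss_majorant_def by (simp add: algebra_simps)
qed

lemma borel_measurable_vec_nth[measurable]: "(\<lambda>x::real^'q. x $ i) \<in> borel_measurable borel"
  by (intro borel_measurable_continuous_onI continuous_intros)

lemma integrable_integral_le_of_nn_integral_le:
  fixes F H :: "'a \<Rightarrow> real"
  assumes [measurable]: "F \<in> borel_measurable M"
    and dom: "\<And>x. \<bar>F x\<bar> \<le> H x" and H: "(\<integral>\<^sup>+x. ennreal (H x) \<partial>M) \<le> ennreal B" and B: "0 \<le> B"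
  shows "integrable M F \<and> integral\<^sup>L M F \<le> B"
proof -
  have le: "(\<integral>\<^sup>+x. ennreal (norm (F x)) \<partial>M) \<le> ennreal B"
    using dom by (intro order_trans[OF nn_integral_mono H]) (auto intro: ennreal_leI)
  have int: "integrable M F"
    by (rule integrableI_bounded) (use le in \<open>auto simp: top_unique[symmetric] ennreal_less_top intro: le_less_trans\<close>)
  have "integral\<^sup>L M F \<le> integral\<^sup>L M (\<lambda>x. norm (F x))"
    using integral_norm_bound[of M F] abs_ge_self[of "integral\<^sup>L M F"] unfolding real_norm_def by linarith
  also have "\<dots> \<le> B" by (rule integral_real_bounded[OF B]) (use le in simp)
  finally show ?thesis using int by simp
qed

lemma nn_integral_product_le:
  fixes A B :: "'a::euclidean_space \<Rightarrow> real" and P :: "'a \<Rightarrow> 'a \<Rightarrow> real"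
  assumes [measurable]: "A \<in> borel_measurable borel" "B \<in> borel_measurable borel"
      "(\<lambda>wz. P (fst wz) (snd wz)) \<in> borel_measurable (borel \<Otimes>\<^sub>M borel)"
    and nonneg: "\<And>w. 0 \<le> A w" "\<And>z. 0 \<le> B z" "\<And>w z. 0 \<le> P w z" "0 \<le> Q" "0 \<le> IA" "0 \<le> IB"
    and IA: "(\<integral>\<^sup>+w. ennreal (A w) \<partial>lborel) \<le> ennreal IA"
    and IB: "\<And>w. (\<integral>\<^sup>+z. ennreal (B z * P w z) \<partial>lborel) \<le> ennreal IB"
  shows "(\<integral>\<^sup>+wz. ennreal (Q * A (fst wz) * B (snd wz) * P (fst wz) (snd wz)) \<partial>lborel) \<le> ennreal (Q * IA * IB)"
proof -
  let ?f = "\<lambda>wz::'a\<times>'a. ennreal (Q * A (fst wz) * B (snd wz) * P (fst wz) (snd wz))"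
  have "?f \<in> borel_measurable (borel \<Otimes>\<^sub>M borel)" by measurable
  hence mf: "?f \<in> borel_measurable (lborel \<Otimes>\<^sub>M lborel)"
    by (subst measurable_cong_sets[OF sets_pair_measure_cong[OF sets_lborel sets_lborel] refl])
  have [measurable]: "(\<lambda>z. P w z) \<in> borel_measurable borel" for w
    using measurable_Pair2[of "\<lambda>wz. P (fst wz) (snd wz)"] by simp
  have "(\<integral>\<^sup>+wz. ?f wz \<partial>lborel) = (\<integral>\<^sup>+wz. ?f wz \<partial>(lborel \<Otimes>\<^sub>M lborel))"
    by (simp add: lborel_prod)
  also have "\<dots> = (\<integral>\<^sup>+w. \<integral>\<^sup>+z. ?f (w, z) \<partial>lborel \<partial>lborel)"
    by (rule lborel.nn_integral_fst[symmetric, OF mf])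
  also have "\<dots> \<le> (\<integral>\<^sup>+w. ennreal (Q * A w) * ennreal IB \<partial>lborel)"
  proof (rule nn_integral_mono)
    fix w
    have "(\<integral>\<^sup>+z. ?f (w, z) \<partial>lborel) = ennreal (Q * A w) * (\<integral>\<^sup>+z. ennreal (B z * P w z) \<partial>lborel)"
      using nonneg by (subst nn_integral_cmult[symmetric]) (auto simp: ennreal_mult[symmetric] mult.assoc)
    also have "\<dots> \<le> ennreal (Q * A w) * ennreal IB" by (intro mult_left_mono IB) auto
    finally show "(\<integral>\<^sup>+z. ?f (w, z) \<partial>lborel) \<le> ennreal (Q * A w) * ennreal IB" .
  qed
  also have "\<dots> = ennreal IB * ennreal Q * (\<integral>\<^sup>+w. ennreal (A w) \<partial>lborel)"
    using nonneg by (subst nn_integral_cmult[symmetric]) (auto simp: ennreal_mult mult_ac intro!: nn_integral_cong)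
  also have "\<dots> \<le> ennreal IB * ennreal Q * ennreal IA" by (intro mult_left_mono IA) auto
  finally show ?thesis using nonneg by (simp add: ennreal_mult mult_ac)
qed

lemma nn_integral_gauss_majorant_le:
  fixes x x' :: "real^'q"
  assumes a: "0 < a" "a \<le> b" and M: "0 < M"
  shows "(\<integral>\<^sup>+w. ennreal (gauss_majorant M a b (w - x) (w - x')) \<partial>lborel)
     \<le> ennreal (a powr (-1/2) * (2 * sqrt (M*pi) ^ CARD('q)))"
proof -
  have b: "0 < b" using a by simp
  have "(\<integral>\<^sup>+w. ennreal (gauss_majorant M a b (w - x) (w - x')) \<partial>lborel)
     = (\<integral>\<^sup>+w. ennreal (a powr (-(real CARD('q)+1)/2) * exp (- (norm (w - x))\<^sup>2 / (M*a))) \<partial>lborel)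
       + (\<integral>\<^sup>+w. ennreal (b powr (-(real CARD('q)+1)/2) * exp (- (norm (w - x'))\<^sup>2 / (M*b))) \<partial>lborel)"
    unfolding gauss_majorant_def
    by (subst nn_integral_add[symmetric]) (auto intro!: nn_integral_cong simp: ennreal_plus)
  also have "\<dots> = ennreal (a powr (-1/2) * sqrt (M*pi) ^ CARD('q) + b powr (-1/2) * sqrt (M*pi) ^ CARD('q))"
    using nn_integral_heat_gauss[OF a(1) M, where 'a="real^'q", of x]
      nn_integral_heat_gauss[OF b M, where 'a="real^'q", of x'] M by (simp add: ennreal_plus)
  also have "\<dots> \<le> ennreal (a powr (-1/2) * (2 * sqrt (M*pi) ^ CARD('q)))"
    using mult_right_mono[of "b powr (-1/2)" "a powr (-1/2)" "sqrt (M*pi) ^ CARD('q)"] powr_mono2'[of "-1/2" a b] a M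
    by (intro ennreal_leI) (auto simp: algebra_simps)
  finally show ?thesis .
qed

lemma nn_integral_gauss_majorant_norm_powr_le:
  fixes x x' w :: "real^'q" and \<alpha> :: real
  assumes a: "0 < a" "a \<le> b" "b \<le> K" and M: "0 < M" and \<alpha>: "0 < \<alpha>" "\<alpha> < CARD('q)"
  shows "(\<integral>\<^sup>+z. ennreal (gauss_majorant M a b (z - x) (z - x') * (norm (w - z) powr (-\<alpha>) + 1)) \<partial>lborel)
     \<le> ennreal (a powr (-1/2 - \<alpha>/2) * (2 * (sqrt M ^ CARD('q) * sqrt M powr (-\<alpha>) * (2/(1-\<alpha>/CARD('q)) + sqrt pi) ^ CARD('q))
                                       + 2 * K powr (\<alpha>/2) * sqrt (M*pi) ^ CARD('q)))"
proof -
  have b: "0 < b" using a by simp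
  define T where "T = sqrt M ^ CARD('q) * sqrt M powr (-\<alpha>) * (2/(1-\<alpha>/CARD('q)) + sqrt pi) ^ CARD('q)"
  define P where "P = sqrt (M*pi) ^ CARD('q)"
  have T0: "0 \<le> T" using \<alpha> M by (simp add: T_def)
  have P0: "0 \<le> P" using M by (simp add: P_def)
  let ?ga = "\<lambda>z. a powr (-(real CARD('q)+1)/2) * exp (- (norm (z - x))\<^sup>2 / (M*a))"
  let ?gb = "\<lambda>z. b powr (-(real CARD('q)+1)/2) * exp (- (norm (z - x'))\<^sup>2 / (M*b))"
  let ?s = "\<lambda>z. norm (w - z) powr (-\<alpha>)"
  have "ennreal (gauss_majorant M a b (z - x) (z - x') * (?s z + 1))
      = ennreal (?ga z * ?s z) + ennreal (?gb z * ?s z) + ennreal (?ga z) + ennreal (?gb z)" for z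
    by (simp add: gauss_majorant_def ennreal_plus[symmetric] algebra_simps del: ennreal_plus)
  hence "(\<integral>\<^sup>+z. ennreal (gauss_majorant M a b (z - x) (z - x') * (?s z + 1)) \<partial>lborel)
      = (\<integral>\<^sup>+z. ennreal (?ga z * ?s z) \<partial>lborel) + (\<integral>\<^sup>+z. ennreal (?gb z * ?s z) \<partial>lborel)
        + (\<integral>\<^sup>+z. ennreal (?ga z) \<partial>lborel) + (\<integral>\<^sup>+z. ennreal (?gb z) \<partial>lborel)"
    by (simp add: nn_integral_add)
  also have "\<dots> \<le> ennreal (a powr (-1/2 - \<alpha>/2) * T) + ennreal (b powr (-1/2 - \<alpha>/2) * T)
        + ennreal (a powr (-1/2) * P) + ennreal (b powr (-1/2) * P)"
    using nn_integral_heat_gauss_norm_powr_le[OF a(1) M \<alpha>(1), where 'a="real^'q", of x w]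
      nn_integral_heat_gauss_norm_powr_le[OF b M \<alpha>(1), where 'a="real^'q", of x' w]
      nn_integral_heat_gauss[OF a(1) M, where 'a="real^'q", of x]
      nn_integral_heat_gauss[OF b M, where 'a="real^'q", of x'] \<alpha>(2)
    unfolding T_def P_def by (intro add_mono) auto
  also have "\<dots> = ennreal (a powr (-1/2 - \<alpha>/2) * T + b powr (-1/2 - \<alpha>/2) * T + a powr (-1/2) * P + b powr (-1/2) * P)"
    using T0 P0 by (simp add: ennreal_plus)
  also have "\<dots> \<le> ennreal (a powr (-1/2 - \<alpha>/2) * (2 * T + 2 * K powr (\<alpha>/2) * P))"
  proof (rule ennreal_leI)
    have 1: "b powr (-1/2 - \<alpha>/2) \<le> a powr (-1/2 - \<alpha>/2)" "b powr (-1/2) \<le> a powr (-1/2)"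
      using a \<alpha> by (auto intro!: powr_mono2')
    \<comment> \<open>The Gaussian part without singularity is only \<open>O(a\<^bsup>-1/2\<^esup>)\<close>; trade \<open>a\<^bsup>\<alpha>/2\<^esup> \<le> K\<^bsup>\<alpha>/2\<^esup>\<close> to match.\<close>
    have "a powr (-1/2 - \<alpha>/2) * a powr (\<alpha>/2) \<le> a powr (-1/2 - \<alpha>/2) * K powr (\<alpha>/2)"
      using a \<alpha> by (intro mult_left_mono powr_mono2) auto
    hence 2: "a powr (-1/2) \<le> a powr (-1/2 - \<alpha>/2) * K powr (\<alpha>/2)" by (simp add: powr_add[symmetric])
    show "a powr (-1/2 - \<alpha>/2) * T + b powr (-1/2 - \<alpha>/2) * T + a powr (-1/2) * P + b powr (-1/2) * P
        \<le> a powr (-1/2 - \<alpha>/2) * (2 * T + 2 * K powr (\<alpha>/2) * P)"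
      using mult_right_mono[OF 1(1) T0] mult_right_mono[OF 1(2) P0] mult_right_mono[OF 2 P0]
      by (simp add: algebra_simps)
  qed
  finally show ?thesis unfolding T_def P_def .
qed

lemma increment_factor_square_le:
  fixes H a b :: real
  assumes a: "0 < a" and ab: "a \<le> b" and H: "0 \<le> H"
  shows "(increment_factor a b H)\<^sup>2 \<le> 4 * min 1 ((H\<^sup>2 + (b - a))/a)"
proof (cases "b \<le> 2*a \<and> H\<^sup>2 \<le> a")
  case True
  define X where "X = (H\<^sup>2 + (b - a))/a"
  have d: "0 \<le> (b-a)/a" "(b-a)/a \<le> 1" using True a ab by (simp_all add: field_simps)
  have "(H / sqrt a + (b-a)/a)\<^sup>2 \<le> 2*(H / sqrt a)\<^sup>2 + 2*((b-a)/a)\<^sup>2"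
    using sum_squares_bound[of "H / sqrt a" "(b-a)/a"] by (simp add: power2_sum algebra_simps)
  also have "\<dots> \<le> 2*(H\<^sup>2/a) + 2*((b-a)/a)"
  proof -
    have "((b-a)/a)\<^sup>2 \<le> (b-a)/a" unfolding power2_eq_square by (rule mult_left_le_one_le[OF d(1) d(1) d(2)])
    moreover have "(H / sqrt a)\<^sup>2 = H\<^sup>2/a" using a by (simp add: power_divide)
    ultimately show ?thesis by linarith
  qed
  also have "\<dots> = 2*X" by (simp add: X_def add_divide_distrib)
  also have "\<dots> \<le> 4 * min 1 X"
  proof -
    have "0 \<le> X" using a ab by (simp add: X_def)
    moreover have "X \<le> 2" using True a by (simp add: X_def field_simps)
    ultimately show ?thesis by (cases "X \<le> 1") auto
  qed
  finally show ?thesis using True by (simp add: increment_factor_def X_def)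
next
  case False
  have "a < H\<^sup>2 + (b - a)" using False ab zero_le_power2[of H] by linarith
  hence "1 < (H\<^sup>2 + (b - a))/a" using a by (simp add: less_divide_eq)
  thus ?thesis unfolding increment_factor_def if_not_P[OF False] by simp
qed

lemma norm_le_of_abs_components_le:
  fixes y :: "real^'q"
  assumes "\<And>i. \<bar>y $ i\<bar> \<le> B"
  shows "norm y \<le> real CARD('q) * B"
proof -
  have "norm y \<le> (\<Sum>i\<in>UNIV. \<bar>y $ i\<bar>)" by (rule norm_le_l1_cart)
  also have "\<dots> \<le> (\<Sum>i\<in>(UNIV::'q set). B)" by (rule sum_mono) (rule assms)
  finally show ?thesis by simp
qed

section \<open>The increment integral\<close>

lemma weighted_abs_heat_kernel_d_diff_le:
  fixes u h :: "real^'q"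
  assumes p: "0 \<le> p" "p \<le> R" and r: "0 \<le> r" "r \<le> R" and h: "norm h \<le> H"
    and a: "0 < a" "a \<le> b" "b \<le> K"
  shows "norm u powr p * exp (r * norm u) * \<bar>heat_kernel_d a l u - heat_kernel_d b l (u - h)\<bar>
    \<le> 27*(real CARD('q)/2 + 2)*exp (1/8) * increment_factor a b (norm h)
       * exp (2*R*H + 2*R\<^sup>2*16*K) * gauss_majorant 32 a b u (u - h)"
proof -
  let ?C = "27*(real CARD('q)/2 + 2)*exp (1/8) * increment_factor a b (norm h)"
  have "0 \<le> ?C" using increment_factor_nonneg[OF a(1,2)] by simp
  have "norm u powr p * exp (r * norm u) * \<bar>heat_kernel_d a l u - heat_kernel_d b l (u - h)\<bar>
      \<le> norm u powr p * exp (r * norm u) * (?C * gauss_majorant 16 a b u (u - h))"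
    by (rule mult_left_mono[OF abs_heat_kernel_d_diff_le[OF a(1,2)]]) simp
  also have "\<dots> = ?C * (norm u powr p * exp (r * norm u) * gauss_majorant 16 a b u (u - h))"
    by (simp add: mult_ac)
  also have "\<dots> \<le> ?C * (exp (2*R*H + 2*R\<^sup>2*16*K) * gauss_majorant (2*16) a b u (u - h))"
    by (rule mult_left_mono[OF powr_exp_mult_gauss_majorant_le[OF p r h a] \<open>0 \<le> ?C\<close>]) simp
  finally show ?thesis by (simp add: mult_ac)
qed

lemma weighted_abs_heat_kernel_d_diff_le_far:
  fixes u h :: "real^'q"
  assumes p: "0 \<le> p" "p \<le> R" and r: "0 \<le> r" "r \<le> R" and h: "norm h \<le> H"
    and a: "0 < a" "a \<le> b" "b \<le> K" and u: "b powr (1/2 - \<eta>) < norm u" "2 * norm h < norm u"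
  shows "norm u powr p * exp (r * norm u) * \<bar>heat_kernel_d a l u - heat_kernel_d b l (u - h)\<bar>
    \<le> 27*(real CARD('q)/2 + 2)*exp (1/8) * increment_factor a b (norm h) * exp (- (b powr (-2*\<eta>))/128)
       * exp (2*R*H + 2*R\<^sup>2*32*K) * gauss_majorant 64 a b u (u - h)"
proof -
  let ?C = "27*(real CARD('q)/2 + 2)*exp (1/8) * increment_factor a b (norm h) * exp (- (b powr (-2*\<eta>))/128)"
  have "0 \<le> ?C" using increment_factor_nonneg[OF a(1,2)] by simp
  have "norm u powr p * exp (r * norm u) * \<bar>heat_kernel_d a l u - heat_kernel_d b l (u - h)\<bar>
      \<le> norm u powr p * exp (r * norm u) * (?C * gauss_majorant 32 a b u (u - h))"
    by (rule mult_left_mono[OF abs_heat_kernel_d_diff_le_far[OF a(1,2) u]]) simp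
  also have "\<dots> = ?C * (norm u powr p * exp (r * norm u) * gauss_majorant 32 a b u (u - h))"
    by (simp add: mult_ac)
  also have "\<dots> \<le> ?C * (exp (2*R*H + 2*R\<^sup>2*32*K) * gauss_majorant (2*32) a b u (u - h))"
    by (rule mult_left_mono[OF powr_exp_mult_gauss_majorant_le[OF p r h a] \<open>0 \<le> ?C\<close>]) simp
  finally show ?thesis by (simp add: mult_ac)
qed

lemma abs_increment_integrand_le:
  fixes w z x x' :: "real^'q"
  assumes p: "0 \<le> p" "p \<le> R" and r: "0 \<le> r" "r \<le> R" and H: "norm (x' - x) \<le> H"
    and a: "0 < a" "a \<le> b" "b \<le> K"
  shows "\<bar>norm (w - x) powr p * norm (z - x) powr p
           * (heat_kernel_d a l (w - x) - heat_kernel_d b l (w - x'))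
           * (heat_kernel_d a l (z - x) - heat_kernel_d b l (z - x'))
           * (if norm (w - x) > max (b powr (1/2 - \<eta>)) (2 * norm (x - x')) then 1 else 0)
           * exp (r * norm (w - x) + r * norm (z - x))
           * (norm (w - z) powr (- \<alpha>) + 1)\<bar>
    \<le> (27*(real CARD('q)/2 + 2)*exp (1/8) * increment_factor a b (norm (x' - x)))\<^sup>2
       * exp (- (b powr (-2*\<eta>))/128) * exp (2*R*H + 2*R\<^sup>2*32*K) * exp (2*R*H + 2*R\<^sup>2*16*K)
       * gauss_majorant 64 a b (w - x) (w - x') * gauss_majorant 32 a b (z - x) (z - x')
       * (norm (w - z) powr (- \<alpha>) + 1)"
    (is "\<bar>?F\<bar> \<le> ?rhs")
proof -
  let ?C = "27*(real CARD('q)/2 + 2)*exp (1/8) * increment_factor a b (norm (x' - x))"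
  let ?P = "norm (w - z) powr (- \<alpha>) + 1"
  have C: "0 \<le> ?C" using increment_factor_nonneg[OF a(1,2)] by simp
  have shift: "v - x - (x' - x) = v - x'" for v :: "real^'q" by simp
  show ?thesis
  proof (cases "norm (w - x) > max (b powr (1/2 - \<eta>)) (2 * norm (x - x'))")
    case False
    hence "(if norm (w - x) > max (b powr (1/2 - \<eta>)) (2 * norm (x - x')) then 1 else 0) = (0::real)"
      by (rule if_not_P)
    thus ?thesis by (simp add: gauss_majorant_nonneg)
  next
    case True
    have W: "norm (w - x) powr p * exp (r * norm (w - x)) * \<bar>heat_kernel_d a l (w - x) - heat_kernel_d b l (w - x')\<bar>
        \<le> ?C * exp (- (b powr (-2*\<eta>))/128) * exp (2*R*H + 2*R\<^sup>2*32*K) * gauss_majorant 64 a b (w - x) (w - x')"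
      using weighted_abs_heat_kernel_d_diff_le_far[OF p r H a, of \<eta> "w - x" l] True
      by (simp add: shift norm_minus_commute)
    have Z: "norm (z - x) powr p * exp (r * norm (z - x)) * \<bar>heat_kernel_d a l (z - x) - heat_kernel_d b l (z - x')\<bar>
        \<le> ?C * exp (2*R*H + 2*R\<^sup>2*16*K) * gauss_majorant 32 a b (z - x) (z - x')"
      using weighted_abs_heat_kernel_d_diff_le[OF p r H a, of "z - x" l] by (simp add: shift)
    have "\<bar>?F\<bar> = (norm (w - x) powr p * exp (r * norm (w - x)) * \<bar>heat_kernel_d a l (w - x) - heat_kernel_d b l (w - x')\<bar>)
               * (norm (z - x) powr p * exp (r * norm (z - x)) * \<bar>heat_kernel_d a l (z - x) - heat_kernel_d b l (z - x')\<bar>)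
               * ?P"
      using True by (simp add: abs_mult exp_add mult_ac)
    also have "\<dots> \<le> (?C * exp (- (b powr (-2*\<eta>))/128) * exp (2*R*H + 2*R\<^sup>2*32*K) * gauss_majorant 64 a b (w - x) (w - x'))
                   * (?C * exp (2*R*H + 2*R\<^sup>2*16*K) * gauss_majorant 32 a b (z - x) (z - x')) * ?P"
      using C by (intro mult_right_mono mult_mono[OF W Z]) (auto simp: gauss_majorant_nonneg)
    also have "\<dots> = ?rhs" by (simp add: power2_eq_square mult_ac)
    finally show ?thesis .
  qed
qed

text \<open>The constant of the theorem; \<open>n\<close> is the dimension and \<open>H\<close> a bound for \<open>|x - x'|\<close>.\<close>

definition increment_integral_const :: "nat \<Rightarrow> real \<Rightarrow> real \<Rightarrow> real \<Rightarrow> real \<Rightarrow> real" where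
  "increment_integral_const n \<alpha> K R H =
     4 * (27*(real n/2 + 2)*exp (1/8))\<^sup>2 * exp (2*R*H + 2*R\<^sup>2*32*K) * exp (2*R*H + 2*R\<^sup>2*16*K)
     * (2 * sqrt (64*pi) ^ n)
     * (2 * (sqrt 32 ^ n * sqrt 32 powr (-\<alpha>) * (2/(1-\<alpha>/real n) + sqrt pi) ^ n) + 2 * K powr (\<alpha>/2) * sqrt (32*pi) ^ n)"

lemma increment_majorant_const_le:
  fixes a b d \<alpha> \<eta>0 \<eta>1 :: real
  assumes \<alpha>: "\<alpha> < real n" and a: "0 < a" "a \<le> b" and d: "0 \<le> d" and \<eta>1: "0 \<le> \<eta>1" "\<eta>1 < 2"
  shows "(27*(real n/2 + 2)*exp (1/8) * increment_factor a b d)\<^sup>2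
       * exp (- (b powr (-2*\<eta>0))/128) * exp (2*R*H + 2*R\<^sup>2*32*K) * exp (2*R*H + 2*R\<^sup>2*16*K)
       * (a powr (-1/2) * (2 * sqrt (64*pi) ^ n))
       * (a powr (-1/2 - \<alpha>/2) * (2 * (sqrt 32 ^ n * sqrt 32 powr (-\<alpha>) * (2/(1-\<alpha>/real n) + sqrt pi) ^ n)
                                   + 2 * K powr (\<alpha>/2) * sqrt (32*pi) ^ n))
    \<le> increment_integral_const n \<alpha> K R H * a powr (-1 - \<alpha>/2) * exp (- \<eta>1 * b powr (-2 * \<eta>0) / 256)
       * (min 1 ((d\<^sup>2 + (b - a)) / a)) powr (1 - \<eta>1/2)"
    (is "?lhs \<le> ?rhs")
proof -
  let ?S = "increment_factor a b d"
  let ?E = "exp (- (b powr (-2*\<eta>0))/128)"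
  define m where "m = min 1 ((d\<^sup>2 + (b - a)) / a)"
  define X where "X = (27*(real n/2 + 2)*exp (1/8))\<^sup>2 * exp (2*R*H + 2*R\<^sup>2*32*K)
    * exp (2*R*H + 2*R\<^sup>2*16*K) * (2 * sqrt (64*pi) ^ n)
    * (2 * (sqrt 32 ^ n * sqrt 32 powr (-\<alpha>) * (2/(1-\<alpha>/real n) + sqrt pi) ^ n)
       + 2 * K powr (\<alpha>/2) * sqrt (32*pi) ^ n)"
  have m: "0 \<le> m" "m \<le> 1" using a by (simp_all add: m_def)
  have X: "0 \<le> X * a powr (-1 - \<alpha>/2)" using \<alpha> by (cases "n = 0") (simp_all add: X_def)
  have "?S\<^sup>2 \<le> 4 * m"
    unfolding m_def by (rule increment_factor_square_le[OF a d])
  also have "m \<le> m powr (1 - \<eta>1/2)"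
    using powr_mono'[of "1 - \<eta>1/2" 1 m] m \<eta>1 by (cases "m = 0") auto
  finally have "?S\<^sup>2 \<le> 4 * m powr (1 - \<eta>1/2)" by simp
  moreover have "?E \<le> exp (- \<eta>1 * b powr (-2 * \<eta>0) / 256)"
    using mult_right_mono[of \<eta>1 2 "b powr (-2*\<eta>0)"] \<eta>1 by simp
  ultimately have "?S\<^sup>2 * ?E \<le> 4 * m powr (1 - \<eta>1/2) * exp (- \<eta>1 * b powr (-2 * \<eta>0) / 256)"
    by (rule mult_mono) auto
  have "?lhs = X * (a powr (-1/2) * a powr (-1/2 - \<alpha>/2)) * (?S\<^sup>2 * ?E)"
    by (simp add: X_def power_mult_distrib mult_ac)
  also have "\<dots> = X * a powr (-1 - \<alpha>/2) * (?S\<^sup>2 * ?E)" by (simp add: powr_add[symmetric])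
  also have "\<dots> \<le> X * a powr (-1 - \<alpha>/2) * (4 * m powr (1 - \<eta>1/2) * exp (- \<eta>1 * b powr (-2 * \<eta>0) / 256))"
    by (rule mult_left_mono[OF \<open>?S\<^sup>2 * ?E \<le> _\<close> X])
  also have "\<dots> = ?rhs" by (simp add: increment_integral_const_def X_def m_def mult_ac)
  finally show ?thesis .
qed

lemma increment_integral_le:
  fixes x x' :: "real^'q" and \<alpha> :: real
  assumes \<alpha>: "0 < \<alpha>" "\<alpha> < CARD('q)" and p: "0 \<le> p" "p \<le> R" and r: "0 \<le> r" "r \<le> R"
    and H: "norm (x' - x) \<le> H" and a: "0 < a" "a \<le> b" "b \<le> K" and \<eta>1: "0 \<le> \<eta>1" "\<eta>1 < 2"
  shows "let F = (\<lambda>(w::real^'q, z::real^'q).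
                  norm (w - x) powr p * norm (z - x) powr p
                  * (heat_kernel_d a l (w - x) - heat_kernel_d b l (w - x'))
                  * (heat_kernel_d a l (z - x) - heat_kernel_d b l (z - x'))
                  * (if norm (w - x) > max (b powr (1/2 - \<eta>0)) (2 * norm (x - x')) then 1 else 0)
                  * exp (r * norm (w - x) + r * norm (z - x))
                  * (norm (w - z) powr (- \<alpha>) + 1))
       in integrable lborel F \<and>
          (\<integral>wz. F wz \<partial>lborel) \<le>
            increment_integral_const CARD('q) \<alpha> K R H * a powr (-1 - \<alpha>/2) * exp (- \<eta>1 * b powr (-2 * \<eta>0) / 256)
              * (min 1 (((norm (x - x'))\<^sup>2 + (b - a)) / a)) powr (1 - \<eta>1/2)"
    (is "Let ?F ?P")
proof -
  define Q where "Q = (27*(real CARD('q)/2 + 2)*exp (1/8) * increment_factor a b (norm (x' - x)))\<^sup>2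
       * exp (- (b powr (-2*\<eta>0))/128) * exp (2*R*H + 2*R\<^sup>2*32*K) * exp (2*R*H + 2*R\<^sup>2*16*K)"
  define Iw where "Iw = a powr (-1/2) * (2 * sqrt (64*pi) ^ CARD('q))"
  define Iz where "Iz = a powr (-1/2 - \<alpha>/2) * (2 * (sqrt 32 ^ CARD('q) * sqrt 32 powr (-\<alpha>)
                          * (2/(1-\<alpha>/CARD('q)) + sqrt pi) ^ CARD('q)) + 2 * K powr (\<alpha>/2) * sqrt (32*pi) ^ CARD('q))"
  define m where "m = min 1 (((norm (x - x'))\<^sup>2 + (b - a)) / a)"
  have nonneg: "0 \<le> Q" "0 \<le> Iw" "0 \<le> Iz" using \<alpha> by (simp_all add: Q_def Iw_def Iz_def)
  have "Q * Iw * Iz \<le> increment_integral_const CARD('q) \<alpha> K R H * a powr (-1 - \<alpha>/2)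
                        * exp (- \<eta>1 * b powr (-2 * \<eta>0) / 256) * m powr (1 - \<eta>1/2)"
    using increment_majorant_const_le[OF \<alpha>(2) a(1,2) norm_ge_zero \<eta>1, of "x' - x"]
    by (simp add: Q_def Iw_def Iz_def m_def norm_minus_commute)
  moreover have "(\<integral>\<^sup>+wz. ennreal (Q * gauss_majorant 64 a b (fst wz - x) (fst wz - x')
                      * gauss_majorant 32 a b (snd wz - x) (snd wz - x')
                      * (norm (fst wz - snd wz) powr (- \<alpha>) + 1)) \<partial>lborel)
        \<le> ennreal (Q * Iw * Iz)"
    using nonneg nn_integral_gauss_majorant_le[OF a(1,2), of 64 x x']
      nn_integral_gauss_majorant_norm_powr_le[OF a _ \<alpha>, of 32 x x']
    by (intro nn_integral_product_le) (auto simp: gauss_majorant_nonneg Iw_def Iz_def gauss_majorant_def)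
  ultimately have "(\<integral>\<^sup>+wz. ennreal (Q * gauss_majorant 64 a b (fst wz - x) (fst wz - x')
                      * gauss_majorant 32 a b (snd wz - x) (snd wz - x')
                      * (norm (fst wz - snd wz) powr (- \<alpha>) + 1)) \<partial>lborel)
        \<le> ennreal (increment_integral_const CARD('q) \<alpha> K R H * a powr (-1 - \<alpha>/2)
                     * exp (- \<eta>1 * b powr (-2 * \<eta>0) / 256) * m powr (1 - \<eta>1/2))"
    by (meson ennreal_leI order_trans)
  moreover have "?F \<in> borel_measurable (borel \<Otimes>\<^sub>M borel)"
    unfolding heat_kernel_d_def heat_kernel_def by measurable
  hence "?F \<in> borel_measurable lborel"
    by (subst measurable_cong_sets[OF sets_lborel refl]) (simp add: borel_prod)
  moreover have "\<bar>?F wz\<bar> \<le> Q * gauss_majorant 64 a b (fst wz - x) (fst wz - x')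
                      * gauss_majorant 32 a b (snd wz - x) (snd wz - x')
                      * (norm (fst wz - snd wz) powr (- \<alpha>) + 1)" for wz
    using abs_increment_integrand_le[OF p r H a, where w="fst wz" and z="snd wz" and l=l and \<eta>=\<eta>0 and \<alpha>=\<alpha>]
    by (simp add: Q_def split_beta')
  ultimately show ?thesis
    unfolding Let_def m_def[symmetric] using \<alpha>
    by (intro integrable_integral_le_of_nn_integral_le)
       (auto simp: increment_integral_const_def)
qed

theorem lemma4p5:
  fixes \<alpha> :: real
  assumes "0 < \<alpha>" "\<alpha> < min 2 (real CARD('q))"
  shows "\<forall>R K. R > 2 \<longrightarrow> K > 0 \<longrightarrow> (\<exists>C::real. \<forall>(p::real) (r::real) (\<eta>0::real) (\<eta>1::real) (l::'q)
           (s::real) (t::real) (t'::real) (x::real^'q) (x'::real^'q).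
      0 \<le> p \<longrightarrow> p \<le> R \<longrightarrow> 0 \<le> r \<longrightarrow> r \<le> R \<longrightarrow>
      1/R < \<eta>0 \<longrightarrow> \<eta>0 < 1/2 \<longrightarrow> 1/R < \<eta>1 \<longrightarrow> \<eta>1 < 1/2 \<longrightarrow>
      0 \<le> s \<longrightarrow> s < t \<longrightarrow> t \<le> t' \<longrightarrow> t' < K \<longrightarrow>
      (\<forall>i. \<bar>x $ i\<bar> \<le> K) \<longrightarrow> (\<forall>i. \<bar>x' $ i\<bar> \<le> K) \<longrightarrow>
      (let F = (\<lambda>(w::real^'q, z::real^'q).
                  norm (w - x) powr p * norm (z - x) powr p
                  * (heat_kernel_d (t - s) l (w - x) - heat_kernel_d (t' - s) l (w - x'))
                  * (heat_kernel_d (t - s) l (z - x) - heat_kernel_d (t' - s) l (z - x'))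
                  * (if norm (w - x) > max ((t' - s) powr (1/2 - \<eta>0)) (2 * norm (x - x')) then 1 else 0)
                  * exp (r * norm (w - x) + r * norm (z - x))
                  * (norm (w - z) powr (- \<alpha>) + 1))
       in integrable lborel F \<and>
          (\<integral>wz. F wz \<partial>lborel) \<le>
            C * (t - s) powr (-1 - \<alpha>/2) * exp (- \<eta>1 * (t' - s) powr (-2 * \<eta>0) / 256)
              * (min 1 (((norm (x - x'))\<^sup>2 + \<bar>t - t'\<bar>) / (t - s))) powr (1 - \<eta>1/2)))"
proof (intro allI impI, goal_cases)
  case (1 R K)
  show ?case
  proof (intro exI[of _ "increment_integral_const CARD('q) \<alpha> K R (real CARD('q) * (2*K))"] allI impI, goal_cases)
    case (1 p r \<eta>0 \<eta>1 l s t t' x x')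
    have "\<bar>x $ i\<bar> \<le> K" "\<bar>x' $ i\<bar> \<le> K" for i using 1 by simp_all
    hence "norm (x' - x) \<le> real CARD('q) * (2*K)"
      by (intro norm_le_of_abs_components_le) (smt (verit) vector_minus_component)
    moreover have "0 < \<eta>1" using 1 \<open>R > 2\<close> by (smt (verit) divide_pos_pos)
    moreover have "\<bar>t - t'\<bar> = (t' - s) - (t - s)" using 1 by simp
    ultimately show ?case
      using increment_integral_le[of \<alpha> p R r x' x "real CARD('q) * (2*K)" "t - s" "t' - s" K \<eta>1 l \<eta>0] assms 1
      by simp
  qed
qed
end
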